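(* Let $(X_0,d_0),(X_1,d_1),(X_2,d_2),\dots,(X_q,d_q)$ be $C^\infty$ vector fields on a neighborhood $\Omega$ of $0$ in $\mathbb{R}^n$, each paired with a degree in $[0,\infty)^\nu\setminus\{0\}$. Suppose $(\mathbf X,\mathbf d)=\{(X_2,d_2),\dots,(X_q,d_q)\}$ controls every element of $\{([X_i,X_j],d_i+d_j):2\le i,j\le q\}$. If $(\mathbf X,\mathbf d)$ controls $(X_0,d_0)$ and $(X_1,d_1)$, then $(\mathbf X,\mathbf d)$ also controls $([X_0,X_1],d_0+d_1)$.
   Context: For $\delta\in[0,\infty)^\nu$, $\delta^d=\prod_\mu\delta_\mu^{d^\mu}$ ($0^0=1$). $B_{(\mathbf X,\mathbf d)}(x,\delta)$ is the set of $y\in\Omega$ reachable from $x$ by an absolutely continuous $\gamma:[0,1]\to\Omega$ with $\gamma'=\sum_la_l\delta^{d_l}X_l(\gamma)$ a.e. and $\|\sum|a_l|^2\|_{L^\infty}<1$ (subspace topology); $(\mathbf X,\mathbf d)$ satisfies $\mathcal C(x,\delta,\Omega)$ if every such ODE from $x$ has an absolutely continuous solution $[0,1]\to\Omega$. $\vec\xi=(\xi,\dots,\xi)$. $(\delta\mathbf X)^\beta$ composes the operators $\delta^{d_{\beta_i}}X_{\beta_i}$ along an ordered list $\beta$; $\|f\|_{C(V)}=\sup_V|f|$ with continuity. $(\mathbf X,\mathbf d)$ controls $(Z,d)$ if there are a neighborhood $U\subseteq\Omega$ of $0$ and $\xi_1>0$ with $\mathcal C(x,\vec{\xi_1},\Omega)$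 for all $x\in U$, and for all $x\in U,\delta\in[0,1]^\nu$: $\delta^{d}Z=\sum_lc_l^{x,\delta}\delta^{d_l}X_l$ on $B_{(\mathbf X,\mathbf d)}(x,\xi_1\delta)$ with $\sup_{x\in U,\delta\in[0,1]^\nu}\sum_{|\beta|\le m}\|(\delta\mathbf X)^\beta c_l^{x,\delta}\|_{C(B_{(\mathbf X,\mathbf d)}(x,\xi_1\delta))}<\infty$ for every $m$. *)

theory Defs
  imports "HOL-Analysis.Analysis"
begin

text \<open>Multi-index power with the convention 0^0 = 1.\<close>
definition dpow :: "real^'v \<Rightarrow> real^'v \<Rightarrow> real" where
  "dpow \<delta> e = (\<Prod>\<mu>\<in>UNIV. if e $ \<mu> = 0 then 1 else (\<delta> $ \<mu>) powr (e $ \<mu>))"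

coinductive smooth_on :: "'a::real_normed_vector set \<Rightarrow> ('a \<Rightarrow> 'b::real_normed_vector) \<Rightarrow> bool"
  for S where
  "continuous_on S f \<Longrightarrow> (\<forall>x\<in>S. (f has_derivative f' x) (at x))
     \<Longrightarrow> (\<forall>v. smooth_on S (\<lambda>x. f' x v)) \<Longrightarrow> smooth_on S f"

definition lie_bracket :: "('a::real_normed_vector \<Rightarrow> 'a) \<Rightarrow> ('a \<Rightarrow> 'a) \<Rightarrow> 'a \<Rightarrow> 'a" where
  "lie_bracket X Y x = frechet_derivative Y (at x) (X x) - frechet_derivative X (at x) (Y x)"

definition abs_cont_on :: "real \<Rightarrow> real \<Rightarrow> (real \<Rightarrow> 'a::real_normed_vector) \<Rightarrow> bool" where
  "abs_cont_on a b f \<longleftrightarrow>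
     (\<forall>\<epsilon>>0. \<exists>\<eta>>0. \<forall>(n::nat) (u::nat \<Rightarrow> real) v.
        (\<forall>k<n. a \<le> u k \<and> u k \<le> v k \<and> v k \<le> b) \<and>
        (\<forall>k<n. \<forall>j<n. k \<noteq> j \<longrightarrow> v k \<le> u j \<or> v j \<le> u k) \<and>
        (\<Sum>k<n. v k - u k) < \<eta>
        \<longrightarrow> (\<Sum>k<n. norm (f (v k) - f (u k))) < \<epsilon>)"

definition admissible_coeffs :: "nat set \<Rightarrow> (nat \<Rightarrow> real \<Rightarrow> real) \<Rightarrow> bool" where
  "admissible_coeffs L a \<longleftrightarrow> (\<forall>l\<in>L. a l \<in> borel_measurable lebesgue) \<and>
     (\<exists>s<1. AE t in lebesgue. t \<in> {0..1} \<longrightarrow> (\<Sum>l\<in>L. \<bar>a l t\<bar>^2) \<le> s)"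

definition ode_solution ::
  "'a::euclidean_space set \<Rightarrow> nat set \<Rightarrow> (nat \<Rightarrow> 'a \<Rightarrow> 'a) \<Rightarrow> (nat \<Rightarrow> real^'v) \<Rightarrow> 'a \<Rightarrow> real^'v
    \<Rightarrow> (nat \<Rightarrow> real \<Rightarrow> real) \<Rightarrow> (real \<Rightarrow> 'a) \<Rightarrow> bool" where
  "ode_solution \<Omega> L X d x \<delta> a \<gamma> \<longleftrightarrow> \<gamma> 0 = x \<and> \<gamma> ` {0..1} \<subseteq> \<Omega> \<and> abs_cont_on 0 1 \<gamma> \<and>
     (AE t in lebesgue. t \<in> {0..1} \<longrightarrow>
        (\<gamma> has_vector_derivative (\<Sum>l\<in>L. (a l t * dpow \<delta> (d l)) *\<^sub>R X l (\<gamma> t))) (at t within {0..1}))"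

definition cc_ball ::
  "'a::euclidean_space set \<Rightarrow> nat set \<Rightarrow> (nat \<Rightarrow> 'a \<Rightarrow> 'a) \<Rightarrow> (nat \<Rightarrow> real^'v) \<Rightarrow> 'a \<Rightarrow> real^'v \<Rightarrow> 'a set" where
  "cc_ball \<Omega> L X d x \<delta> = {y \<in> \<Omega>. \<exists>a \<gamma>. admissible_coeffs L a \<and> ode_solution \<Omega> L X d x \<delta> a \<gamma> \<and> \<gamma> 1 = y}"

definition cond_C ::
  "'a::euclidean_space set \<Rightarrow> nat set \<Rightarrow> (nat \<Rightarrow> 'a \<Rightarrow> 'a) \<Rightarrow> (nat \<Rightarrow> real^'v) \<Rightarrow> 'a \<Rightarrow> real^'v \<Rightarrow> bool" where
  "cond_C \<Omega> L X d x \<delta> \<longleftrightarrow> (\<forall>a. admissible_coeffs L a \<longrightarrow> (\<exists>\<gamma>. ode_solution \<Omega> L X d x \<delta> a \<gamma>))"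

definition lie_deriv_on :: "'a::real_normed_vector set \<Rightarrow> ('a \<Rightarrow> 'a) \<Rightarrow> ('a \<Rightarrow> real) \<Rightarrow> ('a \<Rightarrow> real) \<Rightarrow> bool" where
  "lie_deriv_on V Y g h \<longleftrightarrow> (\<forall>y\<in>V. \<forall>\<gamma> e. e > 0 \<and> \<gamma> 0 = y \<and>
      (\<forall>t\<in>{-e..e}. \<gamma> t \<in> V \<and> (\<gamma> has_vector_derivative Y (\<gamma> t)) (at t within {-e..e}))
      \<longrightarrow> ((g \<circ> \<gamma>) has_real_derivative h y) (at 0 within {-e..e}))"

definition vf_derivs ::
  "'a::real_normed_vector set \<Rightarrow> nat set \<Rightarrow> (nat \<Rightarrow> 'a \<Rightarrow> 'a) \<Rightarrow> ('a \<Rightarrow> real) \<Rightarrow> (nat list \<Rightarrow> 'a \<Rightarrow> real) \<Rightarrow> nat \<Rightarrow> bool" where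
  "vf_derivs V L Y g D m \<longleftrightarrow> (\<forall>y\<in>V. D [] y = g y) \<and>
     (\<forall>\<beta> l. set \<beta> \<subseteq> L \<and> l \<in> L \<and> length \<beta> < m \<longrightarrow> lie_deriv_on V (Y l) (D \<beta>) (D (l # \<beta>))) \<and>
     (\<forall>\<beta>. set \<beta> \<subseteq> L \<and> length \<beta> \<le> m \<longrightarrow> continuous_on V (D \<beta>))"

definition controls ::
  "'a::euclidean_space set \<Rightarrow> nat set \<Rightarrow> (nat \<Rightarrow> 'a \<Rightarrow> 'a) \<Rightarrow> (nat \<Rightarrow> real^'v) \<Rightarrow> ('a \<Rightarrow> 'a) \<Rightarrow> real^'v \<Rightarrow> bool" where
  "controls \<Omega> L X d Z dZ \<longleftrightarrow>
     (\<exists>U \<xi>1. open U \<and> 0 \<in> U \<and> U \<subseteq> \<Omega> \<and> \<xi>1 > 0 \<and>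
        (\<forall>x\<in>U. cond_C \<Omega> L X d x (\<chi> \<mu>. \<xi>1)) \<and>
        (\<exists>c :: 'a \<Rightarrow> real^'v \<Rightarrow> nat \<Rightarrow> 'a \<Rightarrow> real.
          (\<forall>x\<in>U. \<forall>\<delta>. (\<forall>\<mu>. 0 \<le> \<delta> $ \<mu> \<and> \<delta> $ \<mu> \<le> 1) \<longrightarrow>
             (\<forall>y\<in>cc_ball \<Omega> L X d x (\<xi>1 *\<^sub>R \<delta>).
                dpow \<delta> dZ *\<^sub>R Z y = (\<Sum>l\<in>L. (c x \<delta> l y * dpow \<delta> (d l)) *\<^sub>R X l y))) \<and>
          (\<forall>m. \<forall>l\<in>L. \<exists>C::real. \<forall>x\<in>U. \<forall>\<delta>. (\<forall>\<mu>. 0 \<le> \<delta> $ \<mu> \<and> \<delta> $ \<mu> \<le> 1) \<longrightarrow>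
             (\<exists>D. vf_derivs (cc_ball \<Omega> L X d x (\<xi>1 *\<^sub>R \<delta>)) L (\<lambda>j y. dpow \<delta> (d j) *\<^sub>R X j y) (c x \<delta> l) D m \<and>
                  (\<Sum>\<beta>\<in>{\<beta>. set \<beta> \<subseteq> L \<and> length \<beta> \<le> m}.
                      (SUP y\<in>cc_ball \<Omega> L X d x (\<xi>1 *\<^sub>R \<delta>). ereal \<bar>D \<beta> y\<bar>)) \<le> ereal C))))"

end

theory Submission
  imports Defs
begin

text \<open>
  On a ball \<open>B = B(x, \<xi> \<delta>)\<close> write \<open>Y\<^sub>l = \<delta>^d\<^sub>l X\<^sub>l\<close>, and let the hypotheses give
  \<open>\<delta>^d\<^sub>0 X\<^sub>0 = \<Sum>\<^sub>l c\<^sub>l Y\<^sub>l\<close>, \<open>\<delta>^d\<^sub>1 X\<^sub>1 = \<Sum>\<^sub>k c'\<^sub>k Y\<^sub>k\<close> and \<open>[Y\<^sub>l, Y\<^sub>k] = \<Sum>\<^sub>j e\<^sub>l\<^sub>k\<^sub>j Y\<^sub>j\<close> on \<open>B\<close>.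
  Expanding the bracket,
  \<open>\<delta>^(d\<^sub>0 + d\<^sub>1) [X\<^sub>0, X\<^sub>1] = \<Sum>\<^sub>j (\<Sum>\<^sub>l c\<^sub>l Y\<^sub>l c'\<^sub>j - \<Sum>\<^sub>k c'\<^sub>k Y\<^sub>k c\<^sub>j + \<Sum>\<^sub>l\<^sub>,\<^sub>k c\<^sub>l c'\<^sub>k e\<^sub>l\<^sub>k\<^sub>j) Y\<^sub>j\<close>,
  and by the Leibniz rule every derivative \<open>(\<delta>X)\<^sup>\<beta>\<close> of these coefficients is bounded, uniformly in
  \<open>x\<close> and \<open>\<delta>\<close>, by the bounds for \<open>c\<close>, \<open>c'\<close>, \<open>e\<close>, using one more derivative of \<open>c\<close> and \<open>c'\<close>.

  The derivatives \<open>Y\<^sub>l f\<close> are taken along integral curves of \<open>Y\<^sub>l\<close> inside \<open>B\<close>. Such curves exist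
  because \<open>B\<close> is invariant under the local flows of the \<open>Y\<^sub>l\<close>: speed up a control reaching a point
  of \<open>B\<close> and spend the time saved on the flow. Along them derivatives are unique, which is what
  allows differentiating the expansions of \<open>X\<^sub>0\<close> and \<open>X\<^sub>1\<close>. Finitely many controls are combined by
  intersecting their neighbourhoods \<open>U\<close> and taking the least \<open>\<xi>\<^sub>1\<close>.
\<close>

lemma dpow_nonneg: "0 \<le> dpow \<delta> e"
  unfolding dpow_def by (intro prod_nonneg) auto

lemma dpow_add:
  assumes "\<forall>\<mu>. 0 \<le> e1 $ \<mu>" "\<forall>\<mu>. 0 \<le> e2 $ \<mu>"
  shows "dpow \<delta> (e1 + e2) = dpow \<delta> e1 * dpow \<delta> e2"
  unfolding dpow_def prod.distrib[symmetric]
proof (rule prod.cong[OF refl])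
  fix \<mu>
  show "(if (e1 + e2) $ \<mu> = 0 then 1 else \<delta> $ \<mu> powr (e1 + e2) $ \<mu>) =
    (if e1 $ \<mu> = 0 then 1 else \<delta> $ \<mu> powr e1 $ \<mu>) * (if e2 $ \<mu> = 0 then 1 else \<delta> $ \<mu> powr e2 $ \<mu>)"
    using assms[THEN spec, of \<mu>] by (auto simp: powr_add)
qed

lemma dpow_eq_0_iff: "dpow \<delta> e = 0 \<longleftrightarrow> (\<exists>\<mu>. e $ \<mu> \<noteq> 0 \<and> \<delta> $ \<mu> = 0)"
  unfolding dpow_def by (auto simp: prod_zero_iff)

lemma dpow_scaleR_eq_0_iff:
  assumes "\<xi> \<noteq> 0"
  shows "dpow (\<xi> *\<^sub>R \<delta>) e = 0 \<longleftrightarrow> dpow \<delta> e = 0"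
  using assms by (simp add: dpow_eq_0_iff)

lemma dpow_scaleR_mono:
  assumes "0 \<le> \<xi>" "\<xi> \<le> \<xi>'" "\<forall>\<mu>. 0 \<le> \<delta> $ \<mu>" "\<forall>\<mu>. 0 \<le> e $ \<mu>"
  shows "dpow (\<xi> *\<^sub>R \<delta>) e \<le> dpow (\<xi>' *\<^sub>R \<delta>) e"
  unfolding dpow_def
proof (rule prod_mono)
  fix \<mu>
  have "0 \<le> \<xi> * \<delta> $ \<mu>" "\<xi> * \<delta> $ \<mu> \<le> \<xi>' * \<delta> $ \<mu>"
    using assms by (simp_all add: mult_right_mono)
  then show "0 \<le> (if e $ \<mu> = 0 then 1 else (\<xi> *\<^sub>R \<delta>) $ \<mu> powr e $ \<mu>) \<and>
         (if e $ \<mu> = 0 then 1 else (\<xi> *\<^sub>R \<delta>) $ \<mu> powr e $ \<mu>)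
         \<le> (if e $ \<mu> = 0 then 1 else (\<xi>' *\<^sub>R \<delta>) $ \<mu> powr e $ \<mu>)"
    using assms(4) by (auto intro: powr_mono2)
qed

lemma ode_solution_cong_coeffs:
  assumes "ode_solution \<Omega> L X d x \<Delta> a \<gamma>"
    and "\<forall>l\<in>L. \<forall>t. a l t * dpow \<Delta> (d l) = a' l t * dpow \<Delta>' (d l)"
  shows "ode_solution \<Omega> L X d x \<Delta>' a' \<gamma>"
proof -
  have "(\<Sum>l\<in>L. (a l t * dpow \<Delta> (d l)) *\<^sub>R X l (\<gamma> t)) = (\<Sum>l\<in>L. (a' l t * dpow \<Delta>' (d l)) *\<^sub>R X l (\<gamma> t))" for t
    using assms(2) by (intro sum.cong) auto
  then show ?thesis using assms(1) unfolding ode_solution_def by simp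
qed

text \<open>Multiply the \<open>l\<close>-th coefficient by \<open>(\<xi> \<delta>)^d\<^sub>l / (\<xi>' \<delta>)^d\<^sub>l \<le> 1\<close>.\<close>

lemma admissible_coeffs_rescale:
  assumes "0 < \<xi>" "\<xi> \<le> \<xi>'" "\<forall>\<mu>. 0 \<le> \<delta> $ \<mu>" "\<forall>l\<in>L. \<forall>\<mu>. 0 \<le> d l $ \<mu>"
    and "admissible_coeffs L a"
  obtains a' where "admissible_coeffs L a'"
    "\<forall>l\<in>L. \<forall>t. a' l t * dpow (\<xi>' *\<^sub>R \<delta>) (d l) = a l t * dpow (\<xi> *\<^sub>R \<delta>) (d l)"
proof
  define r where "r l = dpow (\<xi> *\<^sub>R \<delta>) (d l) / dpow (\<xi>' *\<^sub>R \<delta>) (d l)" for l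
  define a' where "a' l t = a l t * r l" for l t
  have r01: "0 \<le> r l \<and> r l \<le> 1" if "l \<in> L" for l
    using dpow_scaleR_mono[of \<xi> \<xi>' \<delta> "d l"] assms(1-4) that dpow_nonneg[of "\<xi> *\<^sub>R \<delta>" "d l"]
    unfolding r_def by (auto simp: divide_le_eq_1)
  show "\<forall>l\<in>L. \<forall>t. a' l t * dpow (\<xi>' *\<^sub>R \<delta>) (d l) = a l t * dpow (\<xi> *\<^sub>R \<delta>) (d l)"
    using assms(1,2) by (auto simp: a'_def r_def dpow_scaleR_eq_0_iff)
  obtain s where s: "s < 1" "AE t in lebesgue. t \<in> {0..1} \<longrightarrow> (\<Sum>l\<in>L. \<bar>a l t\<bar>^2) \<le> s"
    using assms(5) unfolding admissible_coeffs_def by blast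
  have "AE t in lebesgue. t \<in> {0..1} \<longrightarrow> (\<Sum>l\<in>L. \<bar>a' l t\<bar>^2) \<le> s"
    using s(2)
  proof eventually_elim
    case (elim t)
    have "\<bar>a' l t\<bar>^2 \<le> \<bar>a l t\<bar>^2" if "l \<in> L" for l
    proof -
      have "\<bar>a' l t\<bar> \<le> \<bar>a l t\<bar>"
        using r01[OF that] unfolding a'_def by (auto simp: abs_mult intro!: mult_left_le)
      then show ?thesis by (intro power_mono) auto
    qed
    then have "(\<Sum>l\<in>L. \<bar>a' l t\<bar>^2) \<le> (\<Sum>l\<in>L. \<bar>a l t\<bar>^2)" by (rule sum_mono)
    then show ?case using elim by auto
  qed
  moreover have "\<forall>l\<in>L. a' l \<in> borel_measurable lebesgue"
    using assms(5) unfolding admissible_coeffs_def a'_def by auto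
  ultimately show "admissible_coeffs L a'" unfolding admissible_coeffs_def using s(1) by blast
qed

lemma cc_ball_scaleR_mono:
  assumes "0 < \<xi>" "\<xi> \<le> \<xi>'" "\<forall>\<mu>. 0 \<le> \<delta> $ \<mu>" "\<forall>l\<in>L. \<forall>\<mu>. 0 \<le> d l $ \<mu>"
  shows "cc_ball \<Omega> L X d x (\<xi> *\<^sub>R \<delta>) \<subseteq> cc_ball \<Omega> L X d x (\<xi>' *\<^sub>R \<delta>)"
proof
  fix y assume "y \<in> cc_ball \<Omega> L X d x (\<xi> *\<^sub>R \<delta>)"
  then obtain a \<gamma> where y: "y \<in> \<Omega>" "admissible_coeffs L a" "ode_solution \<Omega> L X d x (\<xi> *\<^sub>R \<delta>) a \<gamma>" "\<gamma> 1 = y"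
    unfolding cc_ball_def by blast
  obtain a' where a': "admissible_coeffs L a'"
    "\<forall>l\<in>L. \<forall>t. a' l t * dpow (\<xi>' *\<^sub>R \<delta>) (d l) = a l t * dpow (\<xi> *\<^sub>R \<delta>) (d l)"
    using admissible_coeffs_rescale[OF assms y(2)] by blast
  have "ode_solution \<Omega> L X d x (\<xi>' *\<^sub>R \<delta>) a' \<gamma>"
    by (rule ode_solution_cong_coeffs[OF y(3)]) (use a'(2) in auto)
  then show "y \<in> cc_ball \<Omega> L X d x (\<xi>' *\<^sub>R \<delta>)"
    unfolding cc_ball_def using y a' by blast
qed

lemma cond_C_mono:
  assumes "0 < \<xi>" "\<xi> \<le> \<xi>'" "\<forall>l\<in>L. \<forall>\<mu>. 0 \<le> d l $ \<mu>"
    and "cond_C \<Omega> L X d x (\<chi> \<mu>. \<xi>')"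
  shows "cond_C \<Omega> L X d x ((\<chi> \<mu>. \<xi>) :: real^'v)"
  unfolding cond_C_def
proof (intro allI impI)
  fix a assume a: "admissible_coeffs L a"
  have const: "(\<chi> \<mu>. r) = r *\<^sub>R (\<chi> \<mu>. 1 :: real^'v)" for r :: real
    by (simp add: vec_eq_iff)
  obtain a' where a': "admissible_coeffs L a'"
    "\<forall>l\<in>L. \<forall>t. a' l t * dpow (\<xi>' *\<^sub>R (\<chi> \<mu>. 1 :: real^'v)) (d l) = a l t * dpow (\<xi> *\<^sub>R (\<chi> \<mu>. 1)) (d l)"
    by (rule admissible_coeffs_rescale[OF assms(1,2) _ assms(3) a]) auto
  obtain \<gamma> where "ode_solution \<Omega> L X d x (\<xi>' *\<^sub>R (\<chi> \<mu>. 1)) a' \<gamma>"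
    using assms(4) a'(1) unfolding cond_C_def const[of \<xi>'] by blast
  then have "ode_solution \<Omega> L X d x (\<xi> *\<^sub>R (\<chi> \<mu>. 1)) a \<gamma>"
    by (rule ode_solution_cong_coeffs) (use a'(2) in auto)
  then show "\<exists>\<gamma>. ode_solution \<Omega> L X d x (\<chi> \<mu>. \<xi>) a \<gamma>" unfolding const[of \<xi>] by blast
qed


section \<open>Absolute continuity\<close>

definition nonoverlapping_in :: "real \<Rightarrow> real \<Rightarrow> nat \<Rightarrow> (nat \<Rightarrow> real) \<Rightarrow> (nat \<Rightarrow> real) \<Rightarrow> bool" where
  "nonoverlapping_in a b n u v \<longleftrightarrow> (\<forall>k<n. a \<le> u k \<and> u k \<le> v k \<and> v k \<le> b) \<and>
     (\<forall>k<n. \<forall>j<n. k \<noteq> j \<longrightarrow> v k \<le> u j \<or> v j \<le> u k)"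

lemma abs_cont_on_iff:
  "abs_cont_on a b f \<longleftrightarrow> (\<forall>\<epsilon>>0. \<exists>\<eta>>0. \<forall>n u v. nonoverlapping_in a b n u v \<and> (\<Sum>k<n. v k - u k) < \<eta>
      \<longrightarrow> (\<Sum>k<n. norm (f (v k) - f (u k))) < \<epsilon>)"
  unfolding abs_cont_on_def nonoverlapping_in_def conj_assoc ..

lemma abs_cont_onE:
  assumes "abs_cont_on a b f" "\<epsilon> > 0"
  obtains \<eta> where "\<eta> > 0" "\<And>n u v. nonoverlapping_in a b n u v \<Longrightarrow> (\<Sum>k<n. v k - u k) < \<eta> \<Longrightarrow>
      (\<Sum>k<n. norm (f (v k) - f (u k))) < \<epsilon>"
proof -
  obtain \<eta> where "\<eta> > 0" "\<forall>n u v. nonoverlapping_in a b n u v \<and> (\<Sum>k<n. v k - u k) < \<eta>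
      \<longrightarrow> (\<Sum>k<n. norm (f (v k) - f (u k))) < \<epsilon>"
    using assms unfolding abs_cont_on_iff by auto
  then show thesis using that by simp
qed

lemma abs_cont_on_cong:
  assumes "abs_cont_on a b f" "\<And>u. u \<in> {a..b} \<Longrightarrow> f u = g u"
  shows "abs_cont_on a b g"
proof -
  have "(\<Sum>k<n. norm (g (v k) - g (u k))) = (\<Sum>k<n. norm (f (v k) - f (u k)))"
    if "nonoverlapping_in a b n u v" for n u v
    using that assms(2) unfolding nonoverlapping_in_def by (intro sum.cong) auto
  then show ?thesis using assms(1) unfolding abs_cont_on_iff by simp
qed

lemma lipschitz_on_imp_abs_cont_on:
  assumes "K-lipschitz_on {a..b} f"
  shows "abs_cont_on a b f"
  unfolding abs_cont_on_iff
proof (intro allI impI)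
  fix \<epsilon> :: real assume e: "\<epsilon> > 0"
  have K: "0 \<le> K" using assms lipschitz_on_nonneg by blast
  show "\<exists>\<eta>>0. \<forall>n u v. nonoverlapping_in a b n u v \<and> (\<Sum>k<n. v k - u k) < \<eta>
      \<longrightarrow> (\<Sum>k<n. norm (f (v k) - f (u k))) < \<epsilon>"
  proof (intro exI[of _ "\<epsilon> / (K + 1)"] conjI allI impI)
    show "\<epsilon> / (K + 1) > 0" using e K by simp
    fix n u v assume h: "nonoverlapping_in a b n u v \<and> (\<Sum>k<n. v k - u k) < \<epsilon> / (K + 1)"
    have "(\<Sum>k<n. norm (f (v k) - f (u k))) \<le> (\<Sum>k<n. K * (v k - u k))"
    proof (intro sum_mono)
      fix k assume "k \<in> {..<n}"
      then have "u k \<in> {a..b}" "v k \<in> {a..b}" "u k \<le> v k" using h by (auto simp: nonoverlapping_in_def)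
      then show "norm (f (v k) - f (u k)) \<le> K * (v k - u k)"
        using lipschitz_onD[OF assms, of "v k" "u k"] by (simp add: dist_norm dist_real_def)
    qed
    also have "\<dots> = K * (\<Sum>k<n. v k - u k)" by (simp add: sum_distrib_left)
    also have "\<dots> \<le> K * (\<epsilon> / (K + 1))" using h K by (intro mult_left_mono) auto
    also have "\<dots> < \<epsilon>" using e K by (simp add: field_simps)
    finally show "(\<Sum>k<n. norm (f (v k) - f (u k))) < \<epsilon>" .
  qed
qed

lemma abs_cont_on_rescale:
  assumes "0 < r" "abs_cont_on 0 1 \<gamma>"
  shows "abs_cont_on 0 r (\<lambda>u. \<gamma> (u / r))"
  unfolding abs_cont_on_iff
proof (intro allI impI)
  fix \<epsilon> :: real assume "\<epsilon> > 0"
  then obtain \<eta> where \<eta>: "\<eta> > 0" "\<And>n u v. nonoverlapping_in 0 1 n u v \<Longrightarrow> (\<Sum>k<n. v k - u k) < \<eta> \<Longrightarrow>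
      (\<Sum>k<n. norm (\<gamma> (v k) - \<gamma> (u k))) < \<epsilon>"
    using abs_cont_onE[OF assms(2)] by blast
  show "\<exists>\<eta>>0. \<forall>n u v. nonoverlapping_in 0 r n u v \<and> (\<Sum>k<n. v k - u k) < \<eta>
      \<longrightarrow> (\<Sum>k<n. norm (\<gamma> (v k / r) - \<gamma> (u k / r))) < \<epsilon>"
  proof (intro exI[of _ "\<eta> * r"] conjI allI impI)
    show "\<eta> * r > 0" using \<eta>(1) assms(1) by simp
    fix n u v assume h: "nonoverlapping_in 0 r n u v \<and> (\<Sum>k<n. v k - u k) < \<eta> * r"
    have "x / r \<le> y / r \<longleftrightarrow> x \<le> y" for x y using assms(1) by (simp add: divide_le_cancel)
    then have "nonoverlapping_in 0 1 n (\<lambda>k. u k / r) (\<lambda>k. v k / r)"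
      using h assms(1) unfolding nonoverlapping_in_def by auto
    moreover have "(\<Sum>k<n. v k / r - u k / r) < \<eta>"
      using h assms(1) by (simp add: sum_divide_distrib[symmetric] diff_divide_distrib[symmetric] divide_less_eq)
    ultimately show "(\<Sum>k<n. norm (\<gamma> (v k / r) - \<gamma> (u k / r))) < \<epsilon>" by (rule \<eta>(2))
  qed
qed

lemma nonoverlapping_in_clip:
  assumes "nonoverlapping_in a b n u v" "a \<le> c" "c \<le> b"
  shows "nonoverlapping_in a c n (\<lambda>k. min (u k) c) (\<lambda>k. min (v k) c)"
    and "nonoverlapping_in c b n (\<lambda>k. max (u k) c) (\<lambda>k. max (v k) c)"
  using assms unfolding nonoverlapping_in_def by (smt (verit))+

lemma norm_diff_le_clip:
  fixes f :: "real \<Rightarrow> 'a::real_normed_vector"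
  assumes "u \<le> v"
  shows "norm (f v - f u) \<le> norm (f (min v c) - f (min u c)) + norm (f (max v c) - f (max u c))"
proof -
  consider "v \<le> c" | "c \<le> u" | "u < c" "c < v" by linarith
  then show ?thesis
  proof cases
    case 3
    have "norm (f v - f u) = norm ((f c - f u) + (f v - f c))" by simp
    also have "\<dots> \<le> norm (f c - f u) + norm (f v - f c)" by (rule norm_triangle_ineq)
    finally show ?thesis using 3 by simp
  qed (use assms in \<open>simp_all add: min_absorb1 min_absorb2 max_absorb1 max_absorb2\<close>)
qed

lemma abs_cont_on_concat:
  fixes f :: "real \<Rightarrow> 'a::real_normed_vector"
  assumes "a \<le> c" "c \<le> b" "abs_cont_on a c f" "abs_cont_on c b f"
  shows "abs_cont_on a b f"
  unfolding abs_cont_on_iff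
proof (intro allI impI)
  fix \<epsilon> :: real assume "\<epsilon> > 0"
  then have e2: "\<epsilon> / 2 > 0" by simp
  obtain \<eta>1 where \<eta>1: "\<eta>1 > 0" "\<And>n u v. nonoverlapping_in a c n u v \<Longrightarrow> (\<Sum>k<n. v k - u k) < \<eta>1 \<Longrightarrow>
      (\<Sum>k<n. norm (f (v k) - f (u k))) < \<epsilon> / 2"
    using abs_cont_onE[OF assms(3) e2] by blast
  obtain \<eta>2 where \<eta>2: "\<eta>2 > 0" "\<And>n u v. nonoverlapping_in c b n u v \<Longrightarrow> (\<Sum>k<n. v k - u k) < \<eta>2 \<Longrightarrow>
      (\<Sum>k<n. norm (f (v k) - f (u k))) < \<epsilon> / 2"
    using abs_cont_onE[OF assms(4) e2] by blast
  show "\<exists>\<eta>>0. \<forall>n u v. nonoverlapping_in a b n u v \<and> (\<Sum>k<n. v k - u k) < \<eta>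
      \<longrightarrow> (\<Sum>k<n. norm (f (v k) - f (u k))) < \<epsilon>"
  proof (intro exI[of _ "min \<eta>1 \<eta>2"] conjI allI impI)
    show "min \<eta>1 \<eta>2 > 0" using \<eta>1(1) \<eta>2(1) by simp
    fix n u v assume h: "nonoverlapping_in a b n u v \<and> (\<Sum>k<n. v k - u k) < min \<eta>1 \<eta>2"
    have uv: "u k \<le> v k" if "k < n" for k using h that unfolding nonoverlapping_in_def by blast
    define uL vL uR vR where "uL k = min (u k) c" "vL k = min (v k) c" "uR k = max (u k) c" "vR k = max (v k) c"
      for k
    have "vL k - uL k \<le> v k - u k" "vR k - uR k \<le> v k - u k" if "k < n" for k
      using uv[OF that] unfolding uL_vL_uR_vR_def by (auto simp: min_def max_def)
    then have "(\<Sum>k<n. vL k - uL k) \<le> (\<Sum>k<n. v k - u k)" "(\<Sum>k<n. vR k - uR k) \<le> (\<Sum>k<n. v k - u k)"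
      by (auto intro!: sum_mono)
    then have small: "(\<Sum>k<n. vL k - uL k) < \<eta>1" "(\<Sum>k<n. vR k - uR k) < \<eta>2"
      using h by linarith+
    have "nonoverlapping_in a c n uL vL" "nonoverlapping_in c b n uR vR"
      using nonoverlapping_in_clip[OF _ assms(1,2)] h unfolding uL_vL_uR_vR_def by blast+
    then have left: "(\<Sum>k<n. norm (f (vL k) - f (uL k))) < \<epsilon> / 2"
      and right: "(\<Sum>k<n. norm (f (vR k) - f (uR k))) < \<epsilon> / 2"
      using \<eta>1(2) \<eta>2(2) small by blast+
    have "norm (f (v k) - f (u k)) \<le> norm (f (vL k) - f (uL k)) + norm (f (vR k) - f (uR k))" if "k < n" for k
      using norm_diff_le_clip[OF uv[OF that]] unfolding uL_vL_uR_vR_def .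
    then have "(\<Sum>k<n. norm (f (v k) - f (u k))) \<le>
        (\<Sum>k<n. norm (f (vL k) - f (uL k)) + norm (f (vR k) - f (uR k)))"
      by (intro sum_mono) simp
    then show "(\<Sum>k<n. norm (f (v k) - f (u k))) < \<epsilon>" using left right by (simp add: sum.distrib)
  qed
qed

section \<open>Local integral curves of smooth vector fields\<close>

lemma smooth_onE:
  assumes "smooth_on S f"
  obtains f' where "continuous_on S f" "\<forall>x\<in>S. (f has_derivative f' x) (at x)" "\<forall>v. smooth_on S (\<lambda>x. f' x v)"
  using assms by (cases rule: smooth_on.cases) blast

lemma smooth_on_continuous: "smooth_on S f \<Longrightarrow> continuous_on S f"
  by (erule smooth_onE)

lemma smooth_on_differentiable: "smooth_on S f \<Longrightarrow> x \<in> S \<Longrightarrow> f differentiable at x"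
  by (erule smooth_onE) (auto intro: differentiableI)

lemma smooth_on_lipschitz_on_cball:
  fixes F :: "'a::euclidean_space \<Rightarrow> 'b::real_normed_vector"
  assumes "open \<Omega>" "y \<in> \<Omega>" "smooth_on \<Omega> F"
  obtains r K where "r > 0" "cball y r \<subseteq> \<Omega>" "K-lipschitz_on (cball y r) F"
proof -
  obtain f' where "continuous_on \<Omega> F" and f': "\<forall>x\<in>\<Omega>. (F has_derivative f' x) (at x)"
    "\<forall>v. smooth_on \<Omega> (\<lambda>x. f' x v)"
    by (rule smooth_onE[OF assms(3)])
  obtain r where r: "r > 0" "cball y r \<subseteq> \<Omega>" using assms(1,2) open_contains_cball by blast
  have "\<exists>B. \<forall>x\<in>cball y r. norm (f' x b) \<le> B" for b
  proof -
    have "continuous_on (cball y r) (\<lambda>x. f' x b)"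
      using continuous_on_subset[OF smooth_on_continuous[OF f'(2)[rule_format]] r(2)] .
    then have "bounded ((\<lambda>x. f' x b) ` cball y r)"
      by (intro compact_imp_bounded compact_continuous_image) auto
    then show ?thesis unfolding bounded_iff by blast
  qed
  then obtain B where B: "\<And>b x. x \<in> cball y r \<Longrightarrow> norm (f' x b) \<le> B b" by metis
  define K where "K = (\<Sum>b\<in>Basis. \<bar>B b\<bar>)"
  have onorm: "onorm (f' x) \<le> K" if x: "x \<in> cball y r" for x
  proof (rule onorm_le)
    fix v :: 'a
    have "linear (f' x)" using f'(1) x r(2) has_derivative_linear by blast
    then have "f' x v = (\<Sum>b\<in>Basis. (v \<bullet> b) *\<^sub>R f' x b)"
      using linear_sum[of "f' x" "\<lambda>b. (v \<bullet> b) *\<^sub>R b" Basis] by (simp add: euclidean_representation linear_scale)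
    then have "norm (f' x v) \<le> (\<Sum>b\<in>Basis. norm ((v \<bullet> b) *\<^sub>R f' x b))"
      by (simp only:) (rule norm_sum)
    also have "\<dots> \<le> (\<Sum>b\<in>Basis. norm v * \<bar>B b\<bar>)"
    proof (rule sum_mono)
      fix b :: 'a assume "b \<in> Basis"
      then show "norm ((v \<bullet> b) *\<^sub>R f' x b) \<le> norm v * \<bar>B b\<bar>"
        using Basis_le_norm[of b v] B[OF x, of b] by (simp add: abs_le_iff mult_mono)
    qed
    also have "\<dots> = K * norm v" unfolding K_def by (simp add: sum_distrib_left mult.commute)
    finally show "norm (f' x v) \<le> K * norm v" .
  qed
  have der: "(F has_derivative f' x) (at x within cball y r)" if "x \<in> cball y r" for x
    using f'(1) r(2) that by (blast intro: has_derivative_at_withinI)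
  have "K-lipschitz_on (cball y r) F"
  proof (rule lipschitz_onI)
    fix z w assume "z \<in> cball y r" "w \<in> cball y r"
    then show "dist (F z) (F w) \<le> K * dist z w"
      using differentiable_bound[OF convex_cball der onorm, of z w] by (simp add: dist_norm)
  next
    show "0 \<le> K" unfolding K_def by (simp add: sum_nonneg)
  qed
  then show thesis using that r by blast
qed

lemma norm_integral_diff_le:
  fixes f :: "real \<Rightarrow> 'a::euclidean_space"
  assumes "continuous_on {a..b} f" "\<forall>s\<in>{a..b}. norm (f s) \<le> B" "u \<in> {a..b}" "v \<in> {a..b}"
  shows "norm (integral {a..v} f - integral {a..u} f) \<le> B * \<bar>v - u\<bar>"
proof -
  have main: "norm (integral {a..v} f - integral {a..u} f) \<le> B * (v - u)"
    if uv: "u \<le> v" "u \<in> {a..b}" "v \<in> {a..b}" for u v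
  proof -
    have "integral {a..u} f + integral {u..v} f = integral {a..v} f"
      using uv by (intro Henstock_Kurzweil_Integration.integral_combine integrable_continuous_interval
          continuous_on_subset[OF assms(1)]) auto
    moreover have "norm (integral {u..v} f) \<le> B * (v - u)"
      using uv assms(2) by (intro integral_bound continuous_on_subset[OF assms(1)]) auto
    ultimately show ?thesis by (metis add_diff_cancel_left')
  qed
  show ?thesis
    using main[of u v] main[of v u] assms(3,4) by (cases "u \<le> v") (auto simp: norm_minus_commute)
qed

text \<open>The integral from \<open>0\<close> to \<open>t\<close> is written
  with base point \<open>-h\<close>, since \<^term>\<open>{0..t}\<close> is empty for \<open>t < 0\<close>.\<close>

definition picard :: "('a::euclidean_space \<Rightarrow> 'a) \<Rightarrow> real \<Rightarrow> 'a \<Rightarrow> (real \<Rightarrow> 'a) \<Rightarrow> real \<Rightarrow> 'a" where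
  "picard F h y g t = y + (integral {-h..t} (\<lambda>s. F (g s)) - integral {-h..0} (\<lambda>s. F (g s)))"

lemma picard_mem_cball:
  assumes "continuous_on (cball y r) F" "\<forall>z\<in>cball y r. norm (F z) \<le> M"
    and "continuous_on {-h..h} g" "\<forall>s. g s \<in> cball y r" "h * M \<le> r" "t \<in> {-h..h}"
  shows "picard F h y g t \<in> cball y r"
proof -
  have cont: "continuous_on {-h..h} (\<lambda>s. F (g s))"
    using assms(4) by (intro continuous_on_compose2[OF assms(1,3)]) auto
  have M: "0 \<le> M" using assms(2,4) norm_ge_zero order_trans by blast
  have "dist (picard F h y g t) y \<le> M * \<bar>t - 0\<bar>"
    using norm_integral_diff_le[OF cont, of M 0 t] assms(2,4,6) by (simp add: picard_def dist_norm)
  also have "\<dots> \<le> M * h" using assms(6) M by (intro mult_left_mono) auto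
  finally show ?thesis using assms(5) by (simp add: dist_commute mult.commute)
qed

lemma picard_dist_picard_le:
  assumes "continuous_on {-h..h} (\<lambda>s. F (f s))" "continuous_on {-h..h} (\<lambda>s. F (g s))"
    and "\<forall>s\<in>{-h..h}. dist (F (f s)) (F (g s)) \<le> D" "t \<in> {-h..h}"
  shows "dist (picard F h y f t) (picard F h y g t) \<le> D * \<bar>t\<bar>"
proof -
  let ?f = "\<lambda>s. F (f s) - F (g s)"
  have int_f: "(\<lambda>s. F (f s)) integrable_on {-h..v}" and int_g: "(\<lambda>s. F (g s)) integrable_on {-h..v}"
    if "v \<in> {-h..h}" for v
    using that by (auto intro!: integrable_continuous_interval
        intro: continuous_on_subset[OF assms(1)] continuous_on_subset[OF assms(2)])
  have "picard F h y f t - picard F h y g t = integral {-h..t} ?f - integral {-h..0} ?f"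
    using int_f[of t] int_g[of t] int_f[of 0] int_g[of 0] assms(4)
    by (simp add: picard_def Henstock_Kurzweil_Integration.integral_diff)
  also have "norm \<dots> \<le> D * \<bar>t - 0\<bar>"
    using assms by (intro norm_integral_diff_le) (auto simp: dist_norm intro!: continuous_intros)
  finally show ?thesis by (simp add: dist_norm)
qed

lemma picard_contraction:
  assumes "continuous_on (cball y r) F" "K-lipschitz_on (cball y r) F" "h * K \<le> 1/2"
    and "continuous_on {-h..h} g1" "continuous_on {-h..h} g2" "\<forall>s. g1 s \<in> cball y r" "\<forall>s. g2 s \<in> cball y r"
    and "\<forall>s. dist (g1 s) (g2 s) \<le> D" "t \<in> {-h..h}"
  shows "dist (picard F h y g1 t) (picard F h y g2 t) \<le> D / 2"
proof -
  have cont: "continuous_on {-h..h} (\<lambda>s. F (g1 s))" "continuous_on {-h..h} (\<lambda>s. F (g2 s))"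
    using assms(6,7) by (auto intro!: continuous_on_compose2[OF assms(1)] assms(4,5))
  have K: "0 \<le> K" using lipschitz_on_nonneg[OF assms(2)] .
  have D: "0 \<le> D" using assms(8) zero_le_dist order_trans by blast
  have "dist (F (g1 s)) (F (g2 s)) \<le> K * D" for s
  proof -
    have "dist (F (g1 s)) (F (g2 s)) \<le> K * dist (g1 s) (g2 s)"
      using lipschitz_onD[OF assms(2)] assms(6,7) by blast
    also have "\<dots> \<le> K * D" using assms(8) K by (intro mult_left_mono) auto
    finally show ?thesis .
  qed
  then have "dist (picard F h y g1 t) (picard F h y g2 t) \<le> (K * D) * \<bar>t\<bar>"
    using picard_dist_picard_le[where F=F and f=g1 and g=g2, OF cont _ assms(9)] by blast
  also have "\<dots> \<le> (K * D) * h" using assms(9) K D by (intro mult_left_mono) auto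
  also have "\<dots> \<le> D / 2" using mult_right_mono[OF assms(3) D] by (simp add: algebra_simps)
  finally show ?thesis .
qed

lemma picard_has_vector_derivative:
  assumes "continuous_on {-h..h} (\<lambda>s. F (g s))" "t \<in> {-h..h}"
  shows "(picard F h y g has_vector_derivative F (g t)) (at t within {-h..h})"
  unfolding picard_def
  using integral_has_vector_derivative[OF assms] by (auto intro!: derivative_eq_intros)

text \<open>The contraction principle, on the complete space of bounded continuous curves in
  \<^term>\<open>cball y r\<close>; images under the Picard operator are extended constantly outside \<open>[-h, h]\<close>.\<close>

lemma picard_fixed_point:
  assumes "continuous_on (cball y r) F" "K-lipschitz_on (cball y r) F" "\<forall>z\<in>cball y r. norm (F z) \<le> M"
    and "0 < h" "h * M \<le> r" "h * K \<le> 1/2" "0 \<le> r"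
  obtains \<zeta> where "continuous_on UNIV \<zeta>" "\<forall>t. \<zeta> t \<in> cball y r" "\<forall>t\<in>{-h..h}. picard F h y \<zeta> t = \<zeta> t"
proof -
  define S where "S = PiC UNIV (\<lambda>_::real. cball y r)"
  have memS: "g \<in> S \<longleftrightarrow> (\<forall>t. apply_bcontfun g t \<in> cball y r)" for g
    unfolding S_def mem_PiC_iff by auto
  have "\<forall>g\<in>S. \<exists>g'. \<forall>t. apply_bcontfun g' t = picard F h y (apply_bcontfun g) (clamp (-h) h t)"
  proof
    fix g assume "g \<in> S"
    then have "continuous_on {-h..h} (\<lambda>s. F (apply_bcontfun g s))"
      unfolding memS by (intro continuous_on_compose2[OF assms(1)]) auto
    then have "continuous_on (cbox (-h) h) (picard F h y (apply_bcontfun g))"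
      unfolding picard_def cbox_interval
      by (intro continuous_intros indefinite_integral_continuous_1 integrable_continuous_interval)
    then show "\<exists>g'. \<forall>t. apply_bcontfun g' t = picard F h y (apply_bcontfun g) (clamp (-h) h t)"
      by (rule continuous_on_cbox_bcontfunE) blast
  qed
  then obtain T where T: "\<And>g t. g \<in> S \<Longrightarrow> apply_bcontfun (T g) t = picard F h y (apply_bcontfun g) (clamp (-h) h t)"
    by (metis bchoice)
  have clamp: "clamp (-h) h t \<in> {-h..h}" for t
    using clamp_in_interval[of "-h" h t] assms(4) by (auto simp: cbox_interval)
  have "T ` S \<subseteq> S"
    using T memS picard_mem_cball[OF assms(1,3) _ _ assms(5) clamp] by auto
  moreover have "dist (T g1) (T g2) \<le> (1/2) * dist g1 g2" if "g1 \<in> S" "g2 \<in> S" for g1 g2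
  proof (rule dist_bound)
    fix t
    show "dist (apply_bcontfun (T g1) t) (apply_bcontfun (T g2) t) \<le> 1/2 * dist g1 g2"
      using picard_contraction[OF assms(1,2,6) _ _ _ _ _ clamp, of "apply_bcontfun g1" "apply_bcontfun g2" "dist g1 g2" t]
        that T memS dist_bounded[of g1 _ g2] by auto
  qed
  moreover have "complete S" unfolding S_def by (simp add: complete_eq_closed closed_PiC)
  moreover have "const_bcontfun y \<in> S" unfolding memS using assms(7) by (simp add: const_bcontfun.rep_eq)
  ultimately obtain g where g: "g \<in> S" "T g = g"
    using Banach_fix[of S "1/2" T] by auto
  have "picard F h y (apply_bcontfun g) t = apply_bcontfun g t" if "t \<in> {-h..h}" for t
    using T[OF g(1), of t] g(2) that clamp_cancel_cbox[of t "-h" h] by (simp add: cbox_interval)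
  then show thesis using that[of "apply_bcontfun g"] g(1) unfolding memS by auto
qed

lemma local_integral_curve:
  fixes F :: "'a::euclidean_space \<Rightarrow> 'a"
  assumes "open \<Omega>" "y \<in> \<Omega>" "smooth_on \<Omega> F"
  obtains h \<zeta> M where "h > 0" "\<zeta> 0 = y" "M-lipschitz_on {-h..h} \<zeta>"
    "\<forall>t\<in>{-h..h}. \<zeta> t \<in> \<Omega> \<and> (\<zeta> has_vector_derivative F (\<zeta> t)) (at t within {-h..h})"
proof -
  obtain r K where rK: "r > 0" "cball y r \<subseteq> \<Omega>" "K-lipschitz_on (cball y r) F"
    using smooth_on_lipschitz_on_cball[OF assms] by blast
  have K: "0 \<le> K" using lipschitz_on_nonneg[OF rK(3)] .
  have Fc: "continuous_on (cball y r) F"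
    using smooth_on_continuous[OF assms(3)] rK(2) continuous_on_subset by blast
  have "bounded (F ` cball y r)" by (intro compact_imp_bounded compact_continuous_image Fc) auto
  then obtain M where M: "M > 0" "\<forall>z\<in>cball y r. norm (F z) \<le> M"
    unfolding bounded_pos by blast
  define h where "h = min (r / M) (1 / (2 * K + 2))"
  have h: "h > 0" "h * M \<le> r" "h * K \<le> 1/2"
  proof -
    show "h > 0" "h * M \<le> r" unfolding h_def using M rK(1) K by (auto simp: min_def field_simps)
    have "h * K \<le> 1 / (2 * K + 2) * K" unfolding h_def using K by (intro mult_right_mono) auto
    also have "\<dots> \<le> 1/2" using K by (simp add: field_simps)
    finally show "h * K \<le> 1/2" .
  qed
  obtain \<zeta> where \<zeta>: "continuous_on UNIV \<zeta>" "\<forall>t. \<zeta> t \<in> cball y r" "\<forall>t\<in>{-h..h}. picard F h y \<zeta> t = \<zeta> t"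
    using picard_fixed_point[OF Fc rK(3) M(2) h] rK(1) by auto
  have cF: "continuous_on {-h..h} (\<lambda>s. F (\<zeta> s))"
    using \<zeta>(2) by (intro continuous_on_compose2[OF Fc continuous_on_subset[OF \<zeta>(1)]]) auto
  have bound: "\<forall>s\<in>{-h..h}. norm (F (\<zeta> s)) \<le> M" using M(2) \<zeta>(2) by blast
  have "\<zeta> 0 = y" using \<zeta>(3)[rule_format, of 0] h(1) by (simp add: picard_def)
  moreover have "M-lipschitz_on {-h..h} \<zeta>"
  proof (rule lipschitz_onI)
    fix s t assume st: "s \<in> {-h..h}" "t \<in> {-h..h}"
    have "\<zeta> s - \<zeta> t = picard F h y \<zeta> s - picard F h y \<zeta> t" using \<zeta>(3) st by simp
    also have "\<dots> = integral {-h..s} (\<lambda>s. F (\<zeta> s)) - integral {-h..t} (\<lambda>s. F (\<zeta> s))"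
      by (simp add: picard_def)
    finally have "\<zeta> s - \<zeta> t = \<dots>" .
    then show "dist (\<zeta> s) (\<zeta> t) \<le> M * dist s t"
      using norm_integral_diff_le[OF cF bound st(2,1)] by (simp add: dist_norm dist_real_def)
  qed (use M in simp)
  moreover have "(\<zeta> has_vector_derivative F (\<zeta> t)) (at t within {-h..h})" if "t \<in> {-h..h}" for t
    using has_vector_derivative_transform[OF that _ picard_has_vector_derivative[where F=F and g=\<zeta>, OF cF that]] \<zeta>(3) by metis
  ultimately show thesis using that[of h \<zeta> M] h(1) \<zeta>(2) rK(2) by blast
qed

section \<open>Invariance of the balls under the flows of the vector fields\<close>

lemma AE_lebesgue_divide:
  fixes Q :: "real \<Rightarrow> bool"
  assumes "r > 0" "AE v in lebesgue. Q v"
  shows "AE u in lebesgue. Q (u / r)"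
proof -
  obtain N where N: "{v \<in> space lborel. \<not> Q v} \<subseteq> N" "emeasure lborel N = 0" "N \<in> sets lborel"
    using assms(2) unfolding AE_completion_iff by (rule AE_E)
  have "UNIV - N \<in> sets borel" using N(3) by auto
  then have "Measurable.pred borel (\<lambda>v::real. v \<notin> N)"
    unfolding pred_def by (simp add: set_diff_eq)
  moreover have "AE v in lborel. v \<notin> N" using N(2,3) by (intro AE_not_in) (simp add: null_sets_def)
  ultimately have "AE u in lborel. u / r \<notin> N"
    using AE_borel_affine[of "1/r" "\<lambda>v. v \<notin> N" 0] assms(1) by simp
  then have "AE u in lborel. Q (u / r)" by eventually_elim (use N(1) in auto)
  then show ?thesis by (simp add: AE_completion_iff)
qed

lemma AE_lebesgue_not_in_finite:
  fixes A :: "real set"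
  assumes "finite A"
  shows "AE u in lebesgue. u \<notin> A"
  using assms by (simp add: AE_completion_iff AE_not_in countable_imp_null_set_lborel countable_finite)

text \<open>Run the control \<open>a\<close> at speed \<open>1/r\<close> on \<open>[0, r]\<close>, then the constant control \<open>k\<close> on the single
  field \<open>X\<^sub>l\<close>. The bound \<open>s\<close> on \<open>\<Sum>\<^sub>l |a\<^sub>l|\<^sup>2\<close> becomes \<open>s / r\<^sup>2\<close>, which stays below \<open>1\<close> if \<open>s < r\<^sup>2\<close>.\<close>

definition concat_coeffs :: "nat \<Rightarrow> real \<Rightarrow> real \<Rightarrow> (nat \<Rightarrow> real \<Rightarrow> real) \<Rightarrow> nat \<Rightarrow> real \<Rightarrow> real" where
  "concat_coeffs l k r a m u = (if u \<le> r then a m (u / r) / r else if m = l then k else 0)"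

definition concat_path :: "real \<Rightarrow> real \<Rightarrow> (real \<Rightarrow> 'a) \<Rightarrow> (real \<Rightarrow> 'a) \<Rightarrow> real \<Rightarrow> 'a" where
  "concat_path c r \<gamma> \<zeta> u = (if u \<le> r then \<gamma> (u / r) else \<zeta> (c * (u - r)))"

lemma admissible_coeffs_concat:
  assumes "finite L" "l \<in> L" "\<forall>m\<in>L. a m \<in> borel_measurable lebesgue"
    and "AE t in lebesgue. t \<in> {0..1} \<longrightarrow> (\<Sum>m\<in>L. \<bar>a m t\<bar>^2) \<le> s"
    and "0 < r" "s < r^2" "k^2 < 1"
  shows "admissible_coeffs L (concat_coeffs l k r a)"
proof -
  have meas: "concat_coeffs l k r a m \<in> borel_measurable lebesgue" if "m \<in> L" for m
  proof -
    have "(\<lambda>u. a m ((1 / r) *\<^sub>R u)) \<in> borel_measurable lebesgue"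
      using measurable_comp[OF lebesgue_measurable_scaling[of "1 / r"] assms(3)[rule_format, OF that]]
      by (simp add: comp_def)
    moreover have "(\<lambda>u. a m ((1 / r) *\<^sub>R u)) = (\<lambda>u. a m (u / r))" by (simp add: fun_eq_iff)
    ultimately have "(\<lambda>u. a m (u / r) / r) \<in> borel_measurable lebesgue" by simp
    moreover have "{u \<in> space lebesgue. u \<le> r} \<in> sets lebesgue"
      by (auto intro: sets_completionI_sets)
    ultimately show ?thesis unfolding concat_coeffs_def by (intro measurable_If) auto
  qed
  have "AE u in lebesgue. u \<notin> {0, r, 1}" by (rule AE_lebesgue_not_in_finite) simp
  then have "AE u in lebesgue. u \<in> {0..1} \<longrightarrow> (\<Sum>m\<in>L. \<bar>concat_coeffs l k r a m u\<bar>^2) \<le> max (s / r^2) (k^2)"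
    using AE_lebesgue_divide[OF assms(5,4)]
  proof eventually_elim
    case (elim u)
    show ?case
    proof (intro impI)
      assume u: "u \<in> {0..1}"
      show "(\<Sum>m\<in>L. \<bar>concat_coeffs l k r a m u\<bar>^2) \<le> max (s / r^2) (k^2)"
      proof (cases "u \<le> r")
        case True
        then have "(\<Sum>m\<in>L. \<bar>concat_coeffs l k r a m u\<bar>^2) = (\<Sum>m\<in>L. \<bar>a m (u / r)\<bar>^2) / r^2"
          by (simp add: concat_coeffs_def sum_divide_distrib power_divide)
        also have "\<dots> \<le> s / r^2" using elim u True assms(5) by (intro divide_right_mono) auto
        finally show ?thesis by simp
      next
        case False
        then have "(\<Sum>m\<in>L. \<bar>concat_coeffs l k r a m u\<bar>^2) = (\<Sum>m\<in>L. if m = l then k^2 else 0)"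
          by (intro sum.cong) (auto simp: concat_coeffs_def)
        then show ?thesis using assms(1,2) by simp
      qed
    qed
  qed
  moreover have "max (s / r^2) (k^2) < 1" using assms(5-7) by (simp add: field_simps)
  ultimately show ?thesis unfolding admissible_coeffs_def using meas by blast
qed

lemma has_vector_derivative_affine_comp:
  assumes "(\<zeta> has_vector_derivative Z) (at (c * u + b) within {p..q})" "p < c * u + b" "c * u + b < q"
  shows "((\<lambda>u. \<zeta> (c * u + b)) has_vector_derivative c *\<^sub>R Z) (at u)"
proof -
  have "(\<zeta> has_vector_derivative Z) (at (c * u + b))"
    using assms at_within_Icc_at[of p "c * u + b" q] by auto
  moreover have "((\<lambda>u. c * u + b) has_vector_derivative c) (at u)"
    by (auto intro!: derivative_eq_intros simp: has_real_derivative_iff_has_vector_derivative[symmetric])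
  ultimately show ?thesis using vector_diff_chain_at[of "\<lambda>u. c * u + b" c u \<zeta> Z] by (simp add: comp_def)
qed

lemma concat_path_right:
  assumes "u \<in> {r..1}" "0 < r" "\<zeta> 0 = \<gamma> 1"
  shows "concat_path c r \<gamma> \<zeta> u = \<zeta> (c * (u - r))"
  using assms by (cases "u = r") (auto simp: concat_path_def)

lemma abs_cont_on_concat_path:
  assumes "0 < r" "r < 1" "abs_cont_on 0 1 \<gamma>" "M-lipschitz_on {-h..h} \<zeta>" "\<zeta> 0 = \<gamma> 1"
    and "\<forall>u\<in>{r..1}. c * (u - r) \<in> {-h..h}"
  shows "abs_cont_on 0 1 (concat_path c r \<gamma> \<zeta>)"
proof (rule abs_cont_on_concat)
  show "abs_cont_on 0 r (concat_path c r \<gamma> \<zeta>)"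
    using abs_cont_on_rescale[OF assms(1,3)] by (rule abs_cont_on_cong) (simp add: concat_path_def)
  have "\<bar>c\<bar>-lipschitz_on {r..1} (\<lambda>u. c * (u - r))"
    by (auto simp: lipschitz_on_def dist_real_def abs_mult[symmetric] algebra_simps)
  moreover have "M-lipschitz_on ((\<lambda>u. c * (u - r)) ` {r..1}) \<zeta>"
    using assms(6) by (intro lipschitz_on_subset[OF assms(4)]) auto
  ultimately have "(M * \<bar>c\<bar>)-lipschitz_on {r..1} (\<lambda>u. \<zeta> (c * (u - r)))"
    by (rule lipschitz_on_compose2)
  then show "abs_cont_on r 1 (concat_path c r \<gamma> \<zeta>)"
    by (rule lipschitz_on_imp_abs_cont_on[THEN abs_cont_on_cong]) (simp add: concat_path_right assms(1,5))
qed (use assms(1,2) in auto)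

lemma concat_path_has_vector_derivative:
  assumes "finite L" "l \<in> L" "0 < r"
    and \<zeta>: "\<forall>t\<in>{-h..h}. (\<zeta> has_vector_derivative X l (\<zeta> t)) (at t within {-h..h})"
    and "\<forall>u\<in>{r..1}. \<bar>c * (u - r)\<bar> < h" "k * dpow \<Delta> (d l) = c"
    and u: "0 < u" "u < 1" "u \<noteq> r"
    and \<gamma>': "u / r \<in> {0..1} \<longrightarrow> (\<gamma> has_vector_derivative
      (\<Sum>m\<in>L. (a m (u / r) * dpow \<Delta> (d m)) *\<^sub>R X m (\<gamma> (u / r)))) (at (u / r) within {0..1})"
  shows "(concat_path c r \<gamma> \<zeta> has_vector_derivative
      (\<Sum>m\<in>L. (concat_coeffs l k r a m u * dpow \<Delta> (d m)) *\<^sub>R X m (concat_path c r \<gamma> \<zeta> u))) (at u within {0..1})"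
proof (cases "u < r")
  case True
  then have "0 < u / r" "u / r < 1" using u assms(3) by (auto simp: field_simps)
  then have "((\<lambda>u. \<gamma> ((1 / r) * u + 0)) has_vector_derivative
      (1 / r) *\<^sub>R (\<Sum>m\<in>L. (a m (u / r) * dpow \<Delta> (d m)) *\<^sub>R X m (\<gamma> (u / r)))) (at u)"
    using \<gamma>' by (intro has_vector_derivative_affine_comp[where p=0 and q=1]) auto
  then have "(concat_path c r \<gamma> \<zeta> has_vector_derivative
      (1 / r) *\<^sub>R (\<Sum>m\<in>L. (a m (u / r) * dpow \<Delta> (d m)) *\<^sub>R X m (\<gamma> (u / r)))) (at u)"
    by (rule has_vector_derivative_transform_within_open[where S="{..<r}"])
      (use True in \<open>auto simp: concat_path_def\<close>)
  moreover have "(1 / r) *\<^sub>R (\<Sum>m\<in>L. (a m (u / r) * dpow \<Delta> (d m)) *\<^sub>R X m (\<gamma> (u / r))) =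
      (\<Sum>m\<in>L. (concat_coeffs l k r a m u * dpow \<Delta> (d m)) *\<^sub>R X m (concat_path c r \<gamma> \<zeta> u))"
    using True by (simp add: concat_path_def concat_coeffs_def scaleR_sum_right)
  ultimately show ?thesis by (simp add: has_vector_derivative_at_within)
next
  case False
  then have "r < u" "u \<in> {r..1}" using u by auto
  have eq: "c * u + - c * r = c * (u - r)" by (simp add: algebra_simps)
  have "(\<zeta> has_vector_derivative X l (\<zeta> (c * u + - c * r))) (at (c * u + - c * r) within {-h..h})"
    "-h < c * u + - c * r" "c * u + - c * r < h"
    unfolding eq using \<zeta> assms(5)[rule_format, OF \<open>u \<in> {r..1}\<close>] by (auto simp: abs_less_iff)
  then have "((\<lambda>u. \<zeta> (c * u + - c * r)) has_vector_derivative c *\<^sub>R X l (\<zeta> (c * (u - r)))) (at u)"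
    unfolding eq[symmetric] by (rule has_vector_derivative_affine_comp)
  then have der: "(concat_path c r \<gamma> \<zeta> has_vector_derivative c *\<^sub>R X l (\<zeta> (c * (u - r)))) (at u)"
    by (rule has_vector_derivative_transform_within_open[where S="{r<..}"])
      (use \<open>r < u\<close> in \<open>auto simp: concat_path_def algebra_simps\<close>)
  have "concat_coeffs l k r a m u = (if m = l then k else 0)" for m
    using \<open>r < u\<close> by (simp add: concat_coeffs_def)
  then have "(\<Sum>m\<in>L. (concat_coeffs l k r a m u * dpow \<Delta> (d m)) *\<^sub>R X m (concat_path c r \<gamma> \<zeta> u)) =
      (\<Sum>m\<in>L. if m = l then (k * dpow \<Delta> (d l)) *\<^sub>R X l (concat_path c r \<gamma> \<zeta> u) else 0)"
    by (intro sum.cong) auto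
  also have "\<dots> = c *\<^sub>R X l (\<zeta> (c * (u - r)))"
    using assms(1,2,6) \<open>r < u\<close> by (simp add: concat_path_def)
  finally show ?thesis using der by (simp add: has_vector_derivative_at_within)
qed

lemma ode_solution_concat:
  assumes "finite L" "l \<in> L" "ode_solution \<Omega> L X d x \<Delta> a \<gamma>" "0 < r" "r < 1"
    and "\<forall>t\<in>{-h..h}. \<zeta> t \<in> \<Omega> \<and> (\<zeta> has_vector_derivative X l (\<zeta> t)) (at t within {-h..h})"
    and "M-lipschitz_on {-h..h} \<zeta>" "\<zeta> 0 = \<gamma> 1" "\<forall>u\<in>{r..1}. \<bar>c * (u - r)\<bar> < h"
    and "k * dpow \<Delta> (d l) = c"
  shows "ode_solution \<Omega> L X d x \<Delta> (concat_coeffs l k r a) (concat_path c r \<gamma> \<zeta>)"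
proof -
  let ?\<rho> = "concat_path c r \<gamma> \<zeta>"
  have \<gamma>: "\<gamma> 0 = x" "\<gamma> ` {0..1} \<subseteq> \<Omega>" "abs_cont_on 0 1 \<gamma>"
    "AE t in lebesgue. t \<in> {0..1} \<longrightarrow>
        (\<gamma> has_vector_derivative (\<Sum>m\<in>L. (a m t * dpow \<Delta> (d m)) *\<^sub>R X m (\<gamma> t))) (at t within {0..1})"
    using assms(3) unfolding ode_solution_def by blast+
  have h: "\<forall>u\<in>{r..1}. c * (u - r) \<in> {-h..h}" using assms(9) by force
  have "?\<rho> u \<in> \<Omega>" if "u \<in> {0..1}" for u
  proof (cases "u \<le> r")
    case True
    then show ?thesis using that assms(4) \<gamma>(2) by (force simp: concat_path_def)
  next
    case False
    then have "u \<in> {r..1}" using that by auto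
    then have "c * (u - r) \<in> {-h..h}" using h by blast
    then show ?thesis using concat_path_right[where \<zeta>=\<zeta> and \<gamma>=\<gamma>, OF \<open>u \<in> {r..1}\<close> assms(4,8)] assms(6) by auto
  qed
  then have "?\<rho> ` {0..1} \<subseteq> \<Omega>" by blast
  moreover have "?\<rho> 0 = x" using \<gamma>(1) assms(4) by (simp add: concat_path_def)
  moreover have "AE u in lebesgue. u \<notin> {0, r, 1}" by (rule AE_lebesgue_not_in_finite) simp
  then have "AE u in lebesgue. u \<in> {0..1} \<longrightarrow>
      (?\<rho> has_vector_derivative (\<Sum>m\<in>L. (concat_coeffs l k r a m u * dpow \<Delta> (d m)) *\<^sub>R X m (?\<rho> u)))
        (at u within {0..1})"
    using AE_lebesgue_divide[OF assms(4) \<gamma>(4)]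
  proof eventually_elim
    case (elim u)
    have "\<forall>t\<in>{-h..h}. (\<zeta> has_vector_derivative X l (\<zeta> t)) (at t within {-h..h})" using assms(6) by blast
    then show ?case
      using concat_path_has_vector_derivative[where X=X and d=d and \<zeta>=\<zeta>, OF assms(1,2,4) _ assms(9,10)] elim by auto
  qed
  ultimately show ?thesis
    unfolding ode_solution_def using abs_cont_on_concat_path[OF assms(4,5) \<gamma>(3) assms(7,8) h] by blast
qed

text \<open>To reach \<open>\<zeta> \<tau>\<close> from \<open>x\<close>, follow a control to \<open>y\<close> at the faster speed \<open>1/r\<close> and spend the remaining
  time \<open>\<epsilon> = 1 - r\<close> on \<open>X\<^sub>l\<close>. Choosing \<open>1 - 2\<epsilon> = max s 0\<close> keeps the accelerated control admissible,
  and \<open>|\<tau>| < \<epsilon> \<Delta>^d\<^sub>l\<close> keeps the coefficient of \<open>X\<^sub>l\<close> below \<open>1\<close>.\<close>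

lemma cc_ball_integral_curve_step:
  assumes "finite L" "l \<in> L" "y \<in> cc_ball \<Omega> L X d x \<Delta>" "0 < dpow \<Delta> (d l)"
    and "0 < h" "\<zeta> 0 = y" "M-lipschitz_on {-h..h} \<zeta>"
    and "\<forall>t\<in>{-h..h}. \<zeta> t \<in> \<Omega> \<and> (\<zeta> has_vector_derivative X l (\<zeta> t)) (at t within {-h..h})"
  obtains e where "0 < e" "e \<le> h" "\<And>\<tau>. \<bar>\<tau>\<bar> < e \<Longrightarrow> \<zeta> \<tau> \<in> cc_ball \<Omega> L X d x \<Delta>"
proof -
  obtain a \<gamma> where a: "admissible_coeffs L a" and \<gamma>: "ode_solution \<Omega> L X d x \<Delta> a \<gamma>" "\<gamma> 1 = y"
    using assms(3) unfolding cc_ball_def by blast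
  obtain s where s: "s < 1" "AE t in lebesgue. t \<in> {0..1} \<longrightarrow> (\<Sum>m\<in>L. \<bar>a m t\<bar>^2) \<le> s"
    using a unfolding admissible_coeffs_def by blast
  define \<epsilon> where "\<epsilon> = (1 - max s 0) / 2"
  define r where "r = 1 - \<epsilon>"
  have \<epsilon>: "0 < \<epsilon>" "\<epsilon> \<le> 1/2" using s(1) unfolding \<epsilon>_def by auto
  have r: "0 < r" "r < 1" using \<epsilon> unfolding r_def by auto
  have "r^2 = max s 0 + \<epsilon>^2" unfolding r_def \<epsilon>_def by (simp add: power2_eq_square field_simps)
  then have sr: "s < r^2" using \<epsilon>(1) by (smt (verit) zero_less_power)
  define e where "e = min h (\<epsilon> * dpow \<Delta> (d l))"
  have e: "0 < e" "e \<le> h" unfolding e_def using assms(4,5) \<epsilon>(1) by auto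
  have "\<zeta> \<tau> \<in> cc_ball \<Omega> L X d x \<Delta>" if \<tau>: "\<bar>\<tau>\<bar> < e" for \<tau>
  proof -
    define c where "c = \<tau> / \<epsilon>"
    define k where "k = c / dpow \<Delta> (d l)"
    have "\<bar>k\<bar> = \<bar>\<tau>\<bar> / (\<epsilon> * dpow \<Delta> (d l))"
      using assms(4) \<epsilon>(1) by (simp add: k_def c_def abs_divide abs_mult)
    also have "\<dots> < 1" using \<tau> assms(4) \<epsilon>(1) by (simp add: e_def)
    finally have k: "k^2 < 1" by (simp add: abs_square_less_1)
    have "\<bar>c * (u - r)\<bar> < h" if "u \<in> {r..1}" for u
    proof -
      have "\<bar>c * (u - r)\<bar> \<le> \<bar>c\<bar> * \<epsilon>" using that unfolding r_def by (simp add: abs_mult mult_left_mono)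
      also have "\<dots> = \<bar>\<tau>\<bar>" using \<epsilon>(1) by (simp add: c_def abs_divide)
      finally show ?thesis using \<tau> e(2) by linarith
    qed
    moreover have "k * dpow \<Delta> (d l) = c" using assms(4) by (simp add: k_def)
    ultimately have "ode_solution \<Omega> L X d x \<Delta> (concat_coeffs l k r a) (concat_path c r \<gamma> \<zeta>)"
      using ode_solution_concat[OF assms(1,2) \<gamma>(1) r assms(8,7)] assms(6) \<gamma>(2) by simp
    moreover have "admissible_coeffs L (concat_coeffs l k r a)"
      using admissible_coeffs_concat[OF assms(1,2) _ s(2) r(1) sr k] a by (simp add: admissible_coeffs_def)
    moreover have "concat_path c r \<gamma> \<zeta> 1 = \<zeta> \<tau>"
      using r \<epsilon>(1) by (simp add: concat_path_def c_def r_def)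
    moreover have "\<tau> \<in> {-h..h}" using \<tau> e(2) by (simp add: abs_less_iff)
    then have "\<zeta> \<tau> \<in> \<Omega>" using assms(8) by blast
    ultimately show ?thesis unfolding cc_ball_def by blast
  qed
  then show thesis using that e by blast
qed

lemma cc_ball_flow_invariant:
  assumes "finite L" "l \<in> L" "open \<Omega>" "smooth_on \<Omega> (X l)"
    and "y \<in> cc_ball \<Omega> L X d x \<Delta>" "0 < dpow \<Delta> (d l)"
  obtains e \<sigma> where "0 < e" "\<sigma> 0 = y"
    "\<forall>t\<in>{-e..e}. \<sigma> t \<in> cc_ball \<Omega> L X d x \<Delta> \<and> (\<sigma> has_vector_derivative p *\<^sub>R X l (\<sigma> t)) (at t within {-e..e})"
proof -
  have "y \<in> \<Omega>" using assms(5) unfolding cc_ball_def by blast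
  then obtain h \<zeta> M where \<zeta>: "0 < h" "\<zeta> 0 = y" "M-lipschitz_on {-h..h} \<zeta>"
    "\<forall>t\<in>{-h..h}. \<zeta> t \<in> \<Omega> \<and> (\<zeta> has_vector_derivative X l (\<zeta> t)) (at t within {-h..h})"
    using local_integral_curve[OF assms(3) _ assms(4)] by blast
  obtain e0 where e0: "0 < e0" "e0 \<le> h" "\<And>\<tau>. \<bar>\<tau>\<bar> < e0 \<Longrightarrow> \<zeta> \<tau> \<in> cc_ball \<Omega> L X d x \<Delta>"
    using cc_ball_integral_curve_step[OF assms(1,2,5,6) \<zeta>] by blast
  define e where "e = e0 / (\<bar>p\<bar> + 1)"
  have e: "0 < e" using e0(1) by (simp add: e_def)
  have pt: "\<bar>p * t\<bar> < e0" if "t \<in> {-e..e}" for t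
  proof -
    have "\<bar>p * t\<bar> \<le> \<bar>p\<bar> * e" using that by (auto simp: abs_mult intro!: mult_left_mono)
    also have "\<dots> < e0" using e0(1) by (simp add: e_def field_simps)
    finally show ?thesis .
  qed
  have "((\<lambda>t. \<zeta> (p * t)) has_vector_derivative p *\<^sub>R X l (\<zeta> (p * t))) (at t within {-e..e})"
    if t: "t \<in> {-e..e}" for t
  proof -
    have "p * t \<in> {-h..h}" "(\<lambda>t. p * t) ` {-e..e} \<subseteq> {-h..h}" using pt t e0(2) by force+
    then have "(\<zeta> has_vector_derivative X l (\<zeta> (p * t))) (at (p * t) within (\<lambda>t. p * t) ` {-e..e})"
      using \<zeta>(4) by (blast intro: has_vector_derivative_within_subset)
    moreover have "((\<lambda>t. p * t) has_vector_derivative p) (at t within {-e..e})"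
      by (auto intro!: derivative_eq_intros simp: has_real_derivative_iff_has_vector_derivative[symmetric])
    ultimately show ?thesis using vector_diff_chain_within by (force simp: comp_def)
  qed
  then show thesis
    using that[of e "\<lambda>t. \<zeta> (p * t)"] e \<zeta>(2) e0(3) pt by auto
qed

section \<open>Lie derivatives along integral curves\<close>

lemma lie_deriv_on_subset: "V' \<subseteq> V \<Longrightarrow> lie_deriv_on V Y g h \<Longrightarrow> lie_deriv_on V' Y g h"
  unfolding lie_deriv_on_def by (meson subsetD)

lemma lie_deriv_on_cong:
  assumes "\<forall>y\<in>V. g y = g' y" "lie_deriv_on V Y g h"
  shows "lie_deriv_on V Y g' h"
  unfolding lie_deriv_on_def
proof (intro ballI allI impI)
  fix y \<gamma> e assume y: "y \<in> V" and hh: "e > 0 \<and> \<gamma> 0 = y \<and>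
      (\<forall>t\<in>{-e..e}. \<gamma> t \<in> V \<and> (\<gamma> has_vector_derivative Y (\<gamma> t)) (at t within {-e..e}))"
  have "((g \<circ> \<gamma>) has_real_derivative h y) (at 0 within {-e..e})"
    using assms(2) y hh unfolding lie_deriv_on_def by blast
  then have "((g \<circ> \<gamma>) has_vector_derivative h y) (at 0 within {-e..e})"
    by (simp add: has_real_derivative_iff_has_vector_derivative)
  then have "((g' \<circ> \<gamma>) has_vector_derivative h y) (at 0 within {-e..e})"
    by (rule has_vector_derivative_transform[rotated 2]) (use hh assms(1) in auto)
  then show "((g' \<circ> \<gamma>) has_real_derivative h y) (at 0 within {-e..e})"
    by (simp add: has_real_derivative_iff_has_vector_derivative)
qed

lemma lie_deriv_on_zero: "lie_deriv_on V Y (\<lambda>y. 0) (\<lambda>y. 0)"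
  unfolding lie_deriv_on_def comp_def by auto

lemma lie_deriv_on_add:
  assumes "lie_deriv_on V Y f f'" "lie_deriv_on V Y g g'"
  shows "lie_deriv_on V Y (\<lambda>y. f y + g y) (\<lambda>y. f' y + g' y)"
  unfolding lie_deriv_on_def
proof (intro ballI allI impI)
  fix y \<gamma> e assume y: "y \<in> V" and h: "e > 0 \<and> \<gamma> 0 = y \<and>
      (\<forall>t\<in>{-e..e}. \<gamma> t \<in> V \<and> (\<gamma> has_vector_derivative Y (\<gamma> t)) (at t within {-e..e}))"
  have "((f \<circ> \<gamma>) has_real_derivative f' y) (at 0 within {-e..e})"
    using assms(1) y h unfolding lie_deriv_on_def by blast
  moreover have "((g \<circ> \<gamma>) has_real_derivative g' y) (at 0 within {-e..e})"
    using assms(2) y h unfolding lie_deriv_on_def by blast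
  ultimately show "((\<lambda>y. f y + g y) \<circ> \<gamma> has_real_derivative f' y + g' y) (at 0 within {-e..e})"
    unfolding comp_def by (rule DERIV_add)
qed

lemma lie_deriv_on_minus:
  assumes "lie_deriv_on V Y f f'"
  shows "lie_deriv_on V Y (\<lambda>y. - f y) (\<lambda>y. - f' y)"
  unfolding lie_deriv_on_def
proof (intro ballI allI impI)
  fix y \<gamma> e assume y: "y \<in> V" and h: "e > 0 \<and> \<gamma> 0 = y \<and>
      (\<forall>t\<in>{-e..e}. \<gamma> t \<in> V \<and> (\<gamma> has_vector_derivative Y (\<gamma> t)) (at t within {-e..e}))"
  have "((f \<circ> \<gamma>) has_real_derivative f' y) (at 0 within {-e..e})"
    using assms(1) y h unfolding lie_deriv_on_def by blast
  then show "((\<lambda>y. - f y) \<circ> \<gamma> has_real_derivative - f' y) (at 0 within {-e..e})"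
    unfolding comp_def by (rule DERIV_minus)
qed

lemma lie_deriv_on_mult:
  assumes "lie_deriv_on V Y f f'" "lie_deriv_on V Y g g'"
  shows "lie_deriv_on V Y (\<lambda>y. f y * g y) (\<lambda>y. f' y * g y + f y * g' y)"
  unfolding lie_deriv_on_def
proof (intro ballI allI impI)
  fix y \<gamma> e assume y: "y \<in> V" and h: "e > 0 \<and> \<gamma> 0 = y \<and>
      (\<forall>t\<in>{-e..e}. \<gamma> t \<in> V \<and> (\<gamma> has_vector_derivative Y (\<gamma> t)) (at t within {-e..e}))"
  have "((f \<circ> \<gamma>) has_real_derivative f' y) (at 0 within {-e..e})"
    using assms(1) y h unfolding lie_deriv_on_def by blast
  moreover have "((g \<circ> \<gamma>) has_real_derivative g' y) (at 0 within {-e..e})"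
    using assms(2) y h unfolding lie_deriv_on_def by blast
  ultimately have "((\<lambda>t. (f \<circ> \<gamma>) t * (g \<circ> \<gamma>) t) has_real_derivative (f \<circ> \<gamma>) 0 * g' y + f' y * (g \<circ> \<gamma>) 0) (at 0 within {-e..e})"
    by (rule DERIV_mult')
  then show "((\<lambda>y. f y * g y) \<circ> \<gamma> has_real_derivative f' y * g y + f y * g' y) (at 0 within {-e..e})"
    using h by (simp add: comp_def algebra_simps)
qed

lemma lie_deriv_on_sum_list:
  assumes "\<forall>p\<in>set xs. lie_deriv_on V Y (f p) (g p)"
  shows "lie_deriv_on V Y (\<lambda>y. \<Sum>p\<leftarrow>xs. f p y) (\<lambda>y. \<Sum>p\<leftarrow>xs. g p y)"
  using assms
proof (induction xs)
  case Nil then show ?case by (simp add: lie_deriv_on_zero)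
next
  case (Cons a xs)
  then show ?case using lie_deriv_on_add[of V Y "f a" "g a" "\<lambda>y. \<Sum>p\<leftarrow>xs. f p y" "\<lambda>y. \<Sum>p\<leftarrow>xs. g p y"] by simp
qed

lemma continuous_on_sum_list:
  assumes "\<forall>p\<in>set xs. continuous_on V (f p)"
  shows "continuous_on V (\<lambda>y. \<Sum>p\<leftarrow>xs. (f p y :: real))"
  using assms by (induction xs) (auto intro!: continuous_intros)

definition integral_curves_through :: "'a::real_normed_vector set \<Rightarrow> nat set \<Rightarrow> (nat \<Rightarrow> 'a \<Rightarrow> 'a) \<Rightarrow> bool" where
  "integral_curves_through V L Y \<longleftrightarrow> (\<forall>y\<in>V. \<forall>l\<in>L. \<exists>e>0. \<exists>\<sigma>. \<sigma> 0 = y \<and>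
      (\<forall>t\<in>{-e..e}. \<sigma> t \<in> V \<and> (\<sigma> has_vector_derivative Y l (\<sigma> t)) (at t within {-e..e})))"

lemma has_vector_derivative_unique_on_interval:
  fixes f g :: "real \<Rightarrow> 'b::real_normed_vector"
  assumes "e > 0" "(f has_vector_derivative a) (at 0 within {-e..e})" "(g has_vector_derivative b) (at 0 within {-e..e})"
    "\<forall>t\<in>{-e..e}. f t = g t"
  shows "a = b"
proof -
  have z: "(0::real) \<in> {-e..e}" using assms(1) by simp
  have "(g has_vector_derivative a) (at 0 within {-e..e})"
    by (rule has_vector_derivative_transform[OF z _ assms(2)]) (use assms(4) in auto)
  then show ?thesis
    using vector_derivative_unique_within_closed_interval[of "-e" e 0 g a b] assms(1,3)
    by (simp add: cbox_interval)
qed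

lemma lie_deriv_on_unique:
  assumes "integral_curves_through V L Y" "l \<in> L" "lie_deriv_on V (Y l) g h1" "lie_deriv_on V (Y l) g' h2"
    "\<forall>y\<in>V. g y = g' y" "y \<in> V"
  shows "h1 y = h2 y"
proof -
  obtain e \<sigma> where s: "e > 0" "\<sigma> 0 = y"
    "\<forall>t\<in>{-e..e}. \<sigma> t \<in> V \<and> (\<sigma> has_vector_derivative Y l (\<sigma> t)) (at t within {-e..e})"
    using assms(1,2,6) unfolding integral_curves_through_def by blast
  have "((g \<circ> \<sigma>) has_real_derivative h1 y) (at 0 within {-e..e})"
    using assms(3,6) s unfolding lie_deriv_on_def by blast
  moreover have "((g' \<circ> \<sigma>) has_real_derivative h2 y) (at 0 within {-e..e})"
    using assms(4,6) s unfolding lie_deriv_on_def by blast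
  ultimately show ?thesis
    using has_vector_derivative_unique_on_interval[OF s(1), of "g \<circ> \<sigma>" "h1 y" "g' \<circ> \<sigma>" "h2 y"] s(3) assms(5)
    by (auto simp: has_real_derivative_iff_has_vector_derivative)
qed

lemma integral_curves_through_cc_ball:
  assumes "finite L" "open \<Omega>" "\<forall>l\<in>L. smooth_on \<Omega> (X l)" "\<xi> > 0"
  shows "integral_curves_through (cc_ball \<Omega> L X d x (\<xi> *\<^sub>R \<delta>)) L (\<lambda>j y. dpow \<delta> (d j) *\<^sub>R X j y)"
  unfolding integral_curves_through_def
proof (intro ballI)
  fix y l assume y: "y \<in> cc_ball \<Omega> L X d x (\<xi> *\<^sub>R \<delta>)" and l: "l \<in> L"
  show "\<exists>e>0. \<exists>\<sigma>. \<sigma> 0 = y \<and> (\<forall>t\<in>{-e..e}. \<sigma> t \<in> cc_ball \<Omega> L X d x (\<xi> *\<^sub>R \<delta>) \<and>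
      (\<sigma> has_vector_derivative dpow \<delta> (d l) *\<^sub>R X l (\<sigma> t)) (at t within {-e..e}))"
  proof (cases "dpow \<delta> (d l) = 0")
    case True
    then show ?thesis using y by (intro exI[of _ "1::real"] exI[of _ "\<lambda>t. y"]) (auto intro: has_vector_derivative_const)
  next
    case False
    then have "0 < dpow (\<xi> *\<^sub>R \<delta>) (d l)"
      using assms(4) dpow_nonneg[of "\<xi> *\<^sub>R \<delta>" "d l"] by (simp add: dpow_scaleR_eq_0_iff less_le)
    then show ?thesis
      using cc_ball_flow_invariant[OF assms(1) l assms(2) _ y] assms(3) l by metis
  qed
qed

text \<open>\<open>D \<beta>\<close> plays the role of \<open>Y\<^sup>\<beta> (D [])\<close>: the word \<open>l # \<beta>\<close> applies \<open>Y\<^sub>l\<close> after \<open>Y\<^sup>\<beta>\<close>.\<close>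

definition lie_derivs :: "'a::real_normed_vector set \<Rightarrow> nat set \<Rightarrow> (nat \<Rightarrow> 'a \<Rightarrow> 'a) \<Rightarrow> (nat list \<Rightarrow> 'a \<Rightarrow> real) \<Rightarrow> nat \<Rightarrow> bool" where
  "lie_derivs V L Y D m \<longleftrightarrow>
     (\<forall>\<beta> l. set \<beta> \<subseteq> L \<and> l \<in> L \<and> length \<beta> < m \<longrightarrow> lie_deriv_on V (Y l) (D \<beta>) (D (l # \<beta>))) \<and>
     (\<forall>\<beta>. set \<beta> \<subseteq> L \<and> length \<beta> \<le> m \<longrightarrow> continuous_on V (D \<beta>))"

definition lie_derivs_bounded :: "'a::real_normed_vector set \<Rightarrow> nat set \<Rightarrow> (nat \<Rightarrow> 'a \<Rightarrow> 'a) \<Rightarrow> (nat list \<Rightarrow> 'a \<Rightarrow> real) \<Rightarrow> nat \<Rightarrow> real \<Rightarrow> bool" where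
  "lie_derivs_bounded V L Y D m K \<longleftrightarrow> lie_derivs V L Y D m \<and> (\<forall>\<beta>. set \<beta> \<subseteq> L \<and> length \<beta> \<le> m \<longrightarrow> (\<forall>y\<in>V. \<bar>D \<beta> y\<bar> \<le> K))"

lemma vf_derivs_iff: "vf_derivs V L Y g D m \<longleftrightarrow> (\<forall>y\<in>V. D [] y = g y) \<and> lie_derivs V L Y D m"
  unfolding vf_derivs_def lie_derivs_def by blast

lemma lie_derivs_subset: "V' \<subseteq> V \<Longrightarrow> lie_derivs V L Y D m \<Longrightarrow> lie_derivs V' L Y D m"
  unfolding lie_derivs_def by (meson continuous_on_subset lie_deriv_on_subset)

lemma lie_derivs_bounded_subset: "V' \<subseteq> V \<Longrightarrow> lie_derivs_bounded V L Y D m K \<Longrightarrow> lie_derivs_bounded V' L Y D m K"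
  unfolding lie_derivs_bounded_def using lie_derivs_subset by blast

lemma lie_derivs_le: "m' \<le> m \<Longrightarrow> lie_derivs V L Y D m \<Longrightarrow> lie_derivs V L Y D m'"
  unfolding lie_derivs_def by (meson le_trans less_le_trans)

lemma lie_derivs_bounded_le: "m' \<le> m \<Longrightarrow> lie_derivs_bounded V L Y D m K \<Longrightarrow> lie_derivs_bounded V L Y D m' K"
  unfolding lie_derivs_bounded_def using lie_derivs_le by (meson le_trans)

lemma lie_derivs_first:
  assumes "lie_derivs V L Y D (Suc m)" "\<forall>y\<in>V. D [] y = g y" "k \<in> L"
  shows "lie_deriv_on V (Y k) g (D [k])"
proof -
  have "lie_deriv_on V (Y k) (D []) (D [k])" using assms(1,3) unfolding lie_derivs_def by fastforce
  then show ?thesis by (rule lie_deriv_on_cong[OF assms(2)])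
qed

lemma lie_derivs_zero: "lie_derivs V L Y (\<lambda>\<beta> y. 0) m"
  unfolding lie_derivs_def by (auto simp: lie_deriv_on_zero)

lemma lie_derivs_add: "lie_derivs V L Y F m \<Longrightarrow> lie_derivs V L Y G m \<Longrightarrow> lie_derivs V L Y (\<lambda>\<beta> y. F \<beta> y + G \<beta> y) m"
  unfolding lie_derivs_def by (auto intro!: lie_deriv_on_add continuous_intros)

lemma lie_derivs_bounded_add: "lie_derivs_bounded V L Y F m K1 \<Longrightarrow> lie_derivs_bounded V L Y G m K2 \<Longrightarrow> lie_derivs_bounded V L Y (\<lambda>\<beta> y. F \<beta> y + G \<beta> y) m (K1 + K2)"
  unfolding lie_derivs_bounded_def
proof (intro conjI allI impI ballI)
  assume a: "lie_derivs V L Y F m \<and> (\<forall>\<beta>. set \<beta> \<subseteq> L \<and> length \<beta> \<le> m \<longrightarrow> (\<forall>y\<in>V. \<bar>F \<beta> y\<bar> \<le> K1))"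
     "lie_derivs V L Y G m \<and> (\<forall>\<beta>. set \<beta> \<subseteq> L \<and> length \<beta> \<le> m \<longrightarrow> (\<forall>y\<in>V. \<bar>G \<beta> y\<bar> \<le> K2))"
  then show "lie_derivs V L Y (\<lambda>\<beta> y. F \<beta> y + G \<beta> y) m" using lie_derivs_add by blast
  fix \<beta> y assume "set \<beta> \<subseteq> L \<and> length \<beta> \<le> m" "y \<in> V"
  then have "\<bar>F \<beta> y\<bar> \<le> K1" "\<bar>G \<beta> y\<bar> \<le> K2" using a by blast+
  then show "\<bar>F \<beta> y + G \<beta> y\<bar> \<le> K1 + K2" by linarith
qed

lemma lie_derivs_minus: "lie_derivs V L Y F m \<Longrightarrow> lie_derivs V L Y (\<lambda>\<beta> y. - F \<beta> y) m"
  unfolding lie_derivs_def by (auto intro!: lie_deriv_on_minus continuous_intros)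

lemma lie_derivs_bounded_minus: "lie_derivs_bounded V L Y F m K \<Longrightarrow> lie_derivs_bounded V L Y (\<lambda>\<beta> y. - F \<beta> y) m K"
  using lie_derivs_minus[of V L Y F m] by (auto simp: lie_derivs_bounded_def)

lemma lie_derivs_bounded_sum:
  assumes "finite I" "\<forall>i\<in>I. lie_derivs_bounded V L Y (F i) m (K i)"
  shows "lie_derivs_bounded V L Y (\<lambda>\<beta> y. \<Sum>i\<in>I. F i \<beta> y) m (\<Sum>i\<in>I. K i)"
  using assms
proof (induction I rule: finite_induct)
  case empty then show ?case by (simp add: lie_derivs_bounded_def lie_derivs_zero)
next
  case (insert x I)
  then show ?case using lie_derivs_bounded_add[of V L Y "F x" m "K x" "\<lambda>\<beta> y. \<Sum>i\<in>I. F i \<beta> y" "\<Sum>i\<in>I. K i"] by simp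
qed

lemma lie_derivs_shift: "l \<in> L \<Longrightarrow> lie_derivs V L Y F (Suc m) \<Longrightarrow> lie_derivs V L Y (\<lambda>\<beta>. F (\<beta> @ [l])) m"
proof -
  assume l: "l \<in> L" and f: "lie_derivs V L Y F (Suc m)"
  show ?thesis unfolding lie_derivs_def
  proof (intro conjI allI impI)
    fix \<beta> la assume h: "set \<beta> \<subseteq> L \<and> la \<in> L \<and> length \<beta> < m"
    then have "set (\<beta> @ [l]) \<subseteq> L \<and> la \<in> L \<and> length (\<beta> @ [l]) < Suc m" using l by auto
    then have "lie_deriv_on V (Y la) (F (\<beta> @ [l])) (F (la # (\<beta> @ [l])))" using f unfolding lie_derivs_def by blast
    then show "lie_deriv_on V (Y la) (F (\<beta> @ [l])) (F ((la # \<beta>) @ [l]))" by simp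
  next
    fix \<beta> assume h: "set \<beta> \<subseteq> L \<and> length \<beta> \<le> m"
    then have "set (\<beta> @ [l]) \<subseteq> L \<and> length (\<beta> @ [l]) \<le> Suc m" using l by auto
    then show "continuous_on V (F (\<beta> @ [l]))" using f unfolding lie_derivs_def by blast
  qed
qed

lemma lie_derivs_bounded_shift: "l \<in> L \<Longrightarrow> lie_derivs_bounded V L Y F (Suc m) K \<Longrightarrow> lie_derivs_bounded V L Y (\<lambda>\<beta>. F (\<beta> @ [l])) m K"
  unfolding lie_derivs_bounded_def using lie_derivs_shift by auto

fun splittings :: "'b list \<Rightarrow> ('b list \<times> 'b list) list" where
  "splittings [] = [([], [])]"
| "splittings (l # \<beta>) = map (\<lambda>(a, b). (l # a, b)) (splittings \<beta>) @ map (\<lambda>(a, b). (a, l # b)) (splittings \<beta>)"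

lemma set_splittings: "(a, b) \<in> set (splittings \<beta>) \<Longrightarrow> set a \<subseteq> set \<beta> \<and> set b \<subseteq> set \<beta> \<and> length a \<le> length \<beta> \<and> length b \<le> length \<beta>"
proof (induction \<beta> arbitrary: a b)
  case (Cons l \<beta>)
  from Cons.prems obtain a' b' where ab: "(a', b') \<in> set (splittings \<beta>)"
    "(a = l # a' \<and> b = b') \<or> (a = a' \<and> b = l # b')" by auto
  then show ?case using Cons.IH[OF ab(1)] by (elim disjE) auto
qed simp

lemma length_splittings: "length (splittings \<beta>) = 2 ^ length \<beta>"
  by (induction \<beta>) auto

definition leibniz_prod :: "(nat list \<Rightarrow> 'a \<Rightarrow> real) \<Rightarrow> (nat list \<Rightarrow> 'a \<Rightarrow> real) \<Rightarrow> nat list \<Rightarrow> 'a \<Rightarrow> real" where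
  "leibniz_prod F G \<beta> y = (\<Sum>p\<leftarrow>splittings \<beta>. F (fst p) y * G (snd p) y)"

lemma leibniz_prod_Nil: "leibniz_prod F G [] y = F [] y * G [] y"
  unfolding leibniz_prod_def by simp

lemma leibniz_prod_Cons: "leibniz_prod F G (l # \<beta>) y = (\<Sum>p\<leftarrow>splittings \<beta>. F (l # fst p) y * G (snd p) y + F (fst p) y * G (l # snd p) y)"
  unfolding leibniz_prod_def by (simp add: comp_def case_prod_beta sum_list_addf)

lemma lie_derivs_leibniz_prod:
  assumes "lie_derivs V L Y F m" "lie_derivs V L Y G m"
  shows "lie_derivs V L Y (leibniz_prod F G) m"
  unfolding lie_derivs_def
proof (intro conjI allI impI)
  fix \<beta> l assume h: "set \<beta> \<subseteq> L \<and> l \<in> L \<and> length \<beta> < m"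
  have e1: "leibniz_prod F G \<beta> = (\<lambda>y. \<Sum>p\<leftarrow>splittings \<beta>. F (fst p) y * G (snd p) y)" by (simp add: fun_eq_iff leibniz_prod_def)
  have e2: "leibniz_prod F G (l # \<beta>) = (\<lambda>y. \<Sum>p\<leftarrow>splittings \<beta>. F (l # fst p) y * G (snd p) y + F (fst p) y * G (l # snd p) y)"
    by (simp add: fun_eq_iff leibniz_prod_Cons)
  show "lie_deriv_on V (Y l) (leibniz_prod F G \<beta>) (leibniz_prod F G (l # \<beta>))"
    unfolding e1 e2
  proof (rule lie_deriv_on_sum_list[where f = "\<lambda>p y. F (fst p) y * G (snd p) y"], intro ballI)
    fix p assume p: "p \<in> set (splittings \<beta>)"
    then have "set (fst p) \<subseteq> L \<and> length (fst p) < m \<and> set (snd p) \<subseteq> L \<and> length (snd p) < m"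
      using set_splittings[of "fst p" "snd p" \<beta>] h by auto
    then have "lie_deriv_on V (Y l) (F (fst p)) (F (l # fst p))" "lie_deriv_on V (Y l) (G (snd p)) (G (l # snd p))"
      using assms h unfolding lie_derivs_def by blast+
    then show "lie_deriv_on V (Y l) (\<lambda>y. F (fst p) y * G (snd p) y)
        (\<lambda>y. F (l # fst p) y * G (snd p) y + F (fst p) y * G (l # snd p) y)"
      by (rule lie_deriv_on_mult)
  qed
next
  fix \<beta> assume h: "set \<beta> \<subseteq> L \<and> length \<beta> \<le> m"
  have e1: "leibniz_prod F G \<beta> = (\<lambda>y. \<Sum>p\<leftarrow>splittings \<beta>. F (fst p) y * G (snd p) y)" by (simp add: fun_eq_iff leibniz_prod_def)
  show "continuous_on V (leibniz_prod F G \<beta>)"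
    unfolding e1
  proof (rule continuous_on_sum_list[where f = "\<lambda>p y. F (fst p) y * G (snd p) y"], intro ballI)
    fix p assume p: "p \<in> set (splittings \<beta>)"
    then have "set (fst p) \<subseteq> L \<and> length (fst p) \<le> m \<and> set (snd p) \<subseteq> L \<and> length (snd p) \<le> m"
      using set_splittings[of "fst p" "snd p" \<beta>] h by auto
    then show "continuous_on V (\<lambda>y. F (fst p) y * G (snd p) y)"
      using assms unfolding lie_derivs_def by (auto intro!: continuous_intros)
  qed
qed

lemma lie_derivs_bounded_leibniz_prod:
  assumes "lie_derivs_bounded V L Y F m K1" "lie_derivs_bounded V L Y G m K2"
  shows "lie_derivs_bounded V L Y (leibniz_prod F G) m (2 ^ m * (K1 * K2))"
  unfolding lie_derivs_bounded_def
proof (intro conjI allI impI ballI)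
  show "lie_derivs V L Y (leibniz_prod F G) m" using assms lie_derivs_leibniz_prod unfolding lie_derivs_bounded_def by blast
next
  fix \<beta> y assume h: "set \<beta> \<subseteq> L \<and> length \<beta> \<le> m" and y: "y \<in> V"
  have bF: "\<bar>F a y\<bar> \<le> K1" if "set a \<subseteq> L" "length a \<le> m" for a using assms(1) that y unfolding lie_derivs_bounded_def by blast
  have bG: "\<bar>G a y\<bar> \<le> K2" if "set a \<subseteq> L" "length a \<le> m" for a using assms(2) that y unfolding lie_derivs_bounded_def by blast
  have K2: "0 \<le> K2" using bG[of "[]"] by simp
  have K1: "0 \<le> K1" using bF[of "[]"] by simp
  have "\<bar>leibniz_prod F G \<beta> y\<bar> \<le> (\<Sum>p\<leftarrow>splittings \<beta>. \<bar>F (fst p) y * G (snd p) y\<bar>)"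
    unfolding leibniz_prod_def using sum_list_abs[of "map (\<lambda>p. F (fst p) y * G (snd p) y) (splittings \<beta>)"]
    by (simp add: comp_def)
  also have "\<dots> \<le> (\<Sum>p\<leftarrow>splittings \<beta>. K1 * K2)"
  proof (rule sum_list_mono)
    fix p assume p: "p \<in> set (splittings \<beta>)"
    then have "set (fst p) \<subseteq> L \<and> length (fst p) \<le> m \<and> set (snd p) \<subseteq> L \<and> length (snd p) \<le> m"
      using set_splittings[of "fst p" "snd p" \<beta>] h by auto
    then show "\<bar>F (fst p) y * G (snd p) y\<bar> \<le> K1 * K2"
      unfolding abs_mult using bF bG K1 by (intro mult_mono) auto
  qed
  also have "\<dots> = 2 ^ length \<beta> * (K1 * K2)" by (simp add: sum_list_triv length_splittings)
  also have "\<dots> \<le> 2 ^ m * (K1 * K2)"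
  proof (rule mult_right_mono)
    show "(2::real) ^ length \<beta> \<le> 2 ^ m" using h by (intro power_increasing) auto
    show "0 \<le> K1 * K2" using bF[of "[]"] K2 by simp
  qed
  finally show "\<bar>leibniz_prod F G \<beta> y\<bar> \<le> 2 ^ m * (K1 * K2)" .
qed

lemma lie_derivs_bounded_if_SUP_sum_le:
  assumes "finite L" "vf_derivs V L Y g D m"
    and "(\<Sum>\<beta>\<in>{\<beta>. set \<beta> \<subseteq> L \<and> length \<beta> \<le> m}. (SUP y\<in>V. ereal \<bar>D \<beta> y\<bar>)) \<le> ereal C"
  shows "lie_derivs_bounded V L Y D m C"
  unfolding lie_derivs_bounded_def
proof (intro conjI allI impI ballI)
  show "lie_derivs V L Y D m" using assms(2) vf_derivs_iff by blast
next
  fix \<beta> y assume h: "set \<beta> \<subseteq> L \<and> length \<beta> \<le> m" and y: "y \<in> V"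
  let ?W = "{\<beta>. set \<beta> \<subseteq> L \<and> length \<beta> \<le> m}"
  have fin: "finite ?W" using finite_lists_length_le[OF assms(1)] by simp
  have nn: "\<forall>b\<in>?W - {\<beta>}. 0 \<le> (SUP y\<in>V. ereal \<bar>D b y\<bar>)"
  proof
    fix b assume "b \<in> ?W - {\<beta>}"
    have "ereal \<bar>D b y\<bar> \<le> (SUP y\<in>V. ereal \<bar>D b y\<bar>)" using y by (rule SUP_upper)
    then show "0 \<le> (SUP y\<in>V. ereal \<bar>D b y\<bar>)" by (rule order_trans[rotated]) simp
  qed
  have "ereal \<bar>D \<beta> y\<bar> \<le> (SUP y\<in>V. ereal \<bar>D \<beta> y\<bar>)" using y by (rule SUP_upper)
  also have "\<dots> \<le> (\<Sum>b\<in>?W. (SUP y\<in>V. ereal \<bar>D b y\<bar>))"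
  proof -
    have "(\<Sum>b\<in>?W. (SUP y\<in>V. ereal \<bar>D b y\<bar>)) = (SUP y\<in>V. ereal \<bar>D \<beta> y\<bar>) + (\<Sum>b\<in>?W - {\<beta>}. (SUP y\<in>V. ereal \<bar>D b y\<bar>))"
      using h fin by (intro sum.remove) auto
    moreover have "0 \<le> (\<Sum>b\<in>?W - {\<beta>}. (SUP y\<in>V. ereal \<bar>D b y\<bar>))" using nn by (intro sum_nonneg) auto
    ultimately show ?thesis by (simp add: add_increasing2)
  qed
  also have "\<dots> \<le> ereal C" by (rule assms(3))
  finally show "\<bar>D \<beta> y\<bar> \<le> C" by simp
qed

lemma SUP_sum_le_if_lie_derivs_bounded:
  assumes "lie_derivs_bounded V L Y D m K"
  shows "(\<Sum>\<beta>\<in>{\<beta>. set \<beta> \<subseteq> L \<and> length \<beta> \<le> m}. (SUP y\<in>V. ereal \<bar>D \<beta> y\<bar>))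
      \<le> ereal (real (card {\<beta>. set \<beta> \<subseteq> L \<and> length \<beta> \<le> m}) * K)"
proof -
  let ?W = "{\<beta>. set \<beta> \<subseteq> L \<and> length \<beta> \<le> m}"
  have "(\<Sum>\<beta>\<in>?W. (SUP y\<in>V. ereal \<bar>D \<beta> y\<bar>)) \<le> (\<Sum>\<beta>\<in>?W. ereal K)"
  proof (rule sum_mono)
    fix \<beta> assume "\<beta> \<in> ?W"
    then show "(SUP y\<in>V. ereal \<bar>D \<beta> y\<bar>) \<le> ereal K"
      using assms unfolding lie_derivs_bounded_def by (intro SUP_least) auto
  qed
  also have "\<dots> = ereal (real (card ?W) * K)" by (simp add: sum_ereal)
  finally show ?thesis .
qed

section \<open>The Lie bracket of two expanded vector fields\<close>

lemma has_vector_derivative_comp_has_derivative: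
  assumes "(\<sigma> has_vector_derivative v) (at t within S)" "(Z has_derivative Z') (at (\<sigma> t))"
  shows "((\<lambda>s. Z (\<sigma> s)) has_vector_derivative Z' v) (at t within S)"
proof -
  have "((\<lambda>s. Z (\<sigma> s)) has_derivative (\<lambda>x. Z' (x *\<^sub>R v))) (at t within S)"
    using has_derivative_compose[OF assms(1)[unfolded has_vector_derivative_def] assms(2)] .
  moreover have "Z' (x *\<^sub>R v) = x *\<^sub>R Z' v" for x
    using has_derivative_linear[OF assms(2)] by (simp add: linear_scale)
  ultimately show ?thesis unfolding has_vector_derivative_def by simp
qed

text \<open>Differentiate \<open>Q Z = \<Sum>\<^sub>k c\<^sub>k p\<^sub>k X\<^sub>k\<close> along an integral curve of \<open>Y\<^sub>l\<close> through \<open>y\<close>;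
  \<open>Dc\<^sub>k\<close> is \<open>Y\<^sub>l c\<^sub>k\<close>.\<close>

lemma frechet_derivative_of_expansion:
  fixes X :: "nat \<Rightarrow> 'a::euclidean_space \<Rightarrow> 'a" and Z :: "'a \<Rightarrow> 'a"
  assumes "integral_curves_through V L Y" "l \<in> L" "y \<in> V"
    and "Z differentiable at y" "\<forall>k\<in>L. X k differentiable at y"
    and "\<forall>z\<in>V. Q *\<^sub>R Z z = (\<Sum>k\<in>L. (c k z * p k) *\<^sub>R X k z)"
    and "\<forall>k\<in>L. lie_deriv_on V (Y l) (c k) (Dc k)"
  shows "Q *\<^sub>R frechet_derivative Z (at y) (Y l y) =
    (\<Sum>k\<in>L. (c k y * p k) *\<^sub>R frechet_derivative (X k) (at y) (Y l y) + (Dc k y * p k) *\<^sub>R X k y)"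
proof -
  obtain e \<sigma> where \<sigma>: "e > 0" "\<sigma> 0 = y"
    "\<forall>t\<in>{-e..e}. \<sigma> t \<in> V \<and> (\<sigma> has_vector_derivative Y l (\<sigma> t)) (at t within {-e..e})"
    using assms(1,2,3) unfolding integral_curves_through_def by blast
  have \<sigma>0: "(\<sigma> has_vector_derivative Y l y) (at 0 within {-e..e})" using \<sigma> by auto
  have "((\<lambda>t. Z (\<sigma> t)) has_vector_derivative frechet_derivative Z (at y) (Y l y)) (at 0 within {-e..e})"
    using assms(4) \<sigma>(2) frechet_derivative_works by (intro has_vector_derivative_comp_has_derivative[OF \<sigma>0]) auto
  then have lhs: "((\<lambda>t. Q *\<^sub>R Z (\<sigma> t)) has_vector_derivative Q *\<^sub>R frechet_derivative Z (at y) (Y l y))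
      (at 0 within {-e..e})"
    using has_vector_derivative_scaleR[OF DERIV_const[of Q]] by simp
  have rhs: "((\<lambda>t. \<Sum>k\<in>L. (c k (\<sigma> t) * p k) *\<^sub>R X k (\<sigma> t)) has_vector_derivative
      (\<Sum>k\<in>L. (c k y * p k) *\<^sub>R frechet_derivative (X k) (at y) (Y l y) + (Dc k y * p k) *\<^sub>R X k y))
      (at 0 within {-e..e})"
  proof (rule has_vector_derivative_sum)
    fix k assume k: "k \<in> L"
    have "((c k \<circ> \<sigma>) has_real_derivative Dc k y) (at 0 within {-e..e})"
      using assms(7) k assms(3) \<sigma> unfolding lie_deriv_on_def by blast
    then have "((\<lambda>t. c k (\<sigma> t) * p k) has_real_derivative Dc k y * p k) (at 0 within {-e..e})"
      unfolding comp_def by (rule DERIV_cmult_right)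
    moreover have "((\<lambda>t. X k (\<sigma> t)) has_vector_derivative frechet_derivative (X k) (at y) (Y l y))
        (at 0 within {-e..e})"
      using assms(5) k \<sigma>(2) frechet_derivative_works by (intro has_vector_derivative_comp_has_derivative[OF \<sigma>0]) auto
    ultimately show "((\<lambda>t. (c k (\<sigma> t) * p k) *\<^sub>R X k (\<sigma> t)) has_vector_derivative
        (c k y * p k) *\<^sub>R frechet_derivative (X k) (at y) (Y l y) + (Dc k y * p k) *\<^sub>R X k y) (at 0 within {-e..e})"
      using has_vector_derivative_scaleR \<sigma>(2) by fastforce
  qed
  show ?thesis
    by (rule has_vector_derivative_unique_on_interval[OF \<sigma>(1) lhs rhs]) (use \<sigma>(3) assms(6) in auto)
qed

lemma linear_scaleR_expansion:
  assumes "linear A" "P *\<^sub>R z = (\<Sum>l\<in>L. (c l * p l) *\<^sub>R x l)"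
  shows "(P * P') *\<^sub>R A z = (\<Sum>l\<in>L. c l *\<^sub>R (P' *\<^sub>R A (p l *\<^sub>R x l)))"
proof -
  have "(P * P') *\<^sub>R A z = P' *\<^sub>R A (P *\<^sub>R z)" using assms(1) by (simp add: linear_scale)
  also have "\<dots> = (\<Sum>l\<in>L. c l *\<^sub>R (P' *\<^sub>R A (p l *\<^sub>R x l)))"
    using assms by (simp add: linear_sum linear_scale scaleR_sum_right mult.left_commute)
  finally show ?thesis .
qed

text \<open>With \<open>P\<^sub>0 X\<^sub>i\<^sub>0 = \<Sum>\<^sub>l c\<^sub>l Y\<^sub>l\<close> and \<open>P\<^sub>1 X\<^sub>i\<^sub>1 = \<Sum>\<^sub>k c'\<^sub>k Y\<^sub>k\<close>, where \<open>Y\<^sub>l = p\<^sub>l X\<^sub>l\<close>, the bracket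
  \<open>[P\<^sub>0 X\<^sub>i\<^sub>0, P\<^sub>1 X\<^sub>i\<^sub>1]\<close> expands as \<open>\<Sum>\<^sub>l\<^sub>,\<^sub>k c\<^sub>l (Y\<^sub>l c'\<^sub>k) Y\<^sub>k - c'\<^sub>k (Y\<^sub>k c\<^sub>l) Y\<^sub>l + c\<^sub>l c'\<^sub>k [Y\<^sub>l, Y\<^sub>k]\<close>;
  here \<open>Dc l k\<close> stands for \<open>Y\<^sub>k c\<^sub>l\<close>.\<close>

lemma lie_bracket_expansion:
  fixes X :: "nat \<Rightarrow> 'a::euclidean_space \<Rightarrow> 'a"
  assumes "integral_curves_through V L (\<lambda>j z. p j *\<^sub>R X j z)" "y \<in> V"
    and diff: "\<forall>i\<in>insert i0 (insert i1 L). X i differentiable at y"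
    and "\<forall>z\<in>V. P0 *\<^sub>R X i0 z = (\<Sum>l\<in>L. (c l z * p l) *\<^sub>R X l z)"
    and "\<forall>z\<in>V. P1 *\<^sub>R X i1 z = (\<Sum>k\<in>L. (c' k z * p k) *\<^sub>R X k z)"
    and "\<forall>l\<in>L. \<forall>k\<in>L. lie_deriv_on V (\<lambda>z. p k *\<^sub>R X k z) (c l) (Dc l k)"
    and "\<forall>l\<in>L. \<forall>k\<in>L. lie_deriv_on V (\<lambda>z. p k *\<^sub>R X k z) (c' l) (Dc' l k)"
  shows "(P0 * P1) *\<^sub>R lie_bracket (X i0) (X i1) y =
    (\<Sum>l\<in>L. \<Sum>k\<in>L. (c l y * Dc' k l y * p k) *\<^sub>R X k y) - (\<Sum>k\<in>L. \<Sum>l\<in>L. (c' k y * Dc l k y * p l) *\<^sub>R X l y) +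
    (\<Sum>l\<in>L. \<Sum>k\<in>L. (c l y * c' k y) *\<^sub>R ((p l * p k) *\<^sub>R lie_bracket (X l) (X k) y))"
proof -
  define D where "D k = frechet_derivative (X k) (at y)" for k
  have lin: "linear (D k)" if "k \<in> insert i0 (insert i1 L)" for k
    using diff that unfolding D_def by (meson frechet_derivative_works has_derivative_linear)
  have D1: "P1 *\<^sub>R D i1 (p l *\<^sub>R X l y) =
      (\<Sum>k\<in>L. (c' k y * p k) *\<^sub>R D k (p l *\<^sub>R X l y) + (Dc' k l y * p k) *\<^sub>R X k y)" if "l \<in> L" for l
    using frechet_derivative_of_expansion[OF assms(1) that assms(2), of "X i1" X P1 c' p "\<lambda>k. Dc' k l"]
      diff assms(5,7) that unfolding D_def by auto
  have D0: "P0 *\<^sub>R D i0 (p k *\<^sub>R X k y) =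
      (\<Sum>l\<in>L. (c l y * p l) *\<^sub>R D l (p k *\<^sub>R X k y) + (Dc l k y * p l) *\<^sub>R X l y)" if "k \<in> L" for k
    using frechet_derivative_of_expansion[OF assms(1) that assms(2), of "X i0" X P0 c p "\<lambda>l. Dc l k"]
      diff assms(4,6) that unfolding D_def by auto
  define T1 where "T1 = (\<Sum>l\<in>L. \<Sum>k\<in>L. (c l y * Dc' k l y * p k) *\<^sub>R X k y)"
  define T2 where "T2 = (\<Sum>k\<in>L. \<Sum>l\<in>L. (c' k y * Dc l k y * p l) *\<^sub>R X l y)"
  define C1 where "C1 = (\<Sum>l\<in>L. \<Sum>k\<in>L. (c l y * c' k y * p k) *\<^sub>R D k (p l *\<^sub>R X l y))"
  define C2 where "C2 = (\<Sum>l\<in>L. \<Sum>k\<in>L. (c' k y * c l y * p l) *\<^sub>R D l (p k *\<^sub>R X k y))"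
  have "(P0 * P1) *\<^sub>R D i1 (X i0 y) = (\<Sum>l\<in>L. c l y *\<^sub>R (P1 *\<^sub>R D i1 (p l *\<^sub>R X l y)))"
    using assms(2,4) lin by (intro linear_scaleR_expansion) auto
  also have "\<dots> = C1 + T1"
    unfolding C1_def T1_def using D1
    by (simp add: scaleR_sum_right scaleR_add_right sum.distrib[symmetric] mult.assoc)
  finally have first: "(P0 * P1) *\<^sub>R D i1 (X i0 y) = C1 + T1" .
  have "(P1 * P0) *\<^sub>R D i0 (X i1 y) = (\<Sum>k\<in>L. c' k y *\<^sub>R (P0 *\<^sub>R D i0 (p k *\<^sub>R X k y)))"
    using assms(2,5) lin by (intro linear_scaleR_expansion) auto
  also have "\<dots> = C2 + T2"
    unfolding C2_def T2_def using D0 sum.swap[of "\<lambda>l k. (c' k y * c l y * p l) *\<^sub>R D l (p k *\<^sub>R X k y)" L L]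
    by (simp add: scaleR_sum_right scaleR_add_right sum.distrib[symmetric] mult.assoc)
  finally have second: "(P0 * P1) *\<^sub>R D i0 (X i1 y) = C2 + T2" by (simp add: mult.commute)
  have "(c l y * c' k y * p k) *\<^sub>R D k (p l *\<^sub>R X l y) - (c' k y * c l y * p l) *\<^sub>R D l (p k *\<^sub>R X k y) =
      (c l y * c' k y) *\<^sub>R ((p l * p k) *\<^sub>R lie_bracket (X l) (X k) y)" if "l \<in> L" "k \<in> L" for l k
    using lin[of k] lin[of l] that unfolding lie_bracket_def D_def[symmetric]
    by (simp add: linear_scale algebra_simps)
  then have brackets: "C1 - C2 = (\<Sum>l\<in>L. \<Sum>k\<in>L. (c l y * c' k y) *\<^sub>R ((p l * p k) *\<^sub>R lie_bracket (X l) (X k) y))"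
    unfolding C1_def C2_def by (simp add: sum_subtractf[symmetric])
  have "(P0 * P1) *\<^sub>R lie_bracket (X i0) (X i1) y = (P0 * P1) *\<^sub>R D i1 (X i0 y) - (P0 * P1) *\<^sub>R D i0 (X i1 y)"
    unfolding lie_bracket_def D_def scaleR_diff_right ..
  also have "\<dots> = T1 - T2 + (C1 - C2)" unfolding first second by (simp add: algebra_simps)
  finally show ?thesis unfolding brackets T1_def T2_def .
qed

text \<open>The coefficient of \<open>Y\<^sub>j\<close> in the expansion above, once \<open>[Y\<^sub>l, Y\<^sub>k] = \<Sum>\<^sub>j e\<^sub>l\<^sub>k\<^sub>j Y\<^sub>j\<close>.\<close>

definition bracket_coeff ::
  "nat set \<Rightarrow> (nat \<Rightarrow> 'a \<Rightarrow> real) \<Rightarrow> (nat \<Rightarrow> 'a \<Rightarrow> real) \<Rightarrow> (nat \<Rightarrow> nat \<Rightarrow> nat \<Rightarrow> 'a \<Rightarrow> real)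
    \<Rightarrow> (nat \<Rightarrow> nat \<Rightarrow> 'a \<Rightarrow> real) \<Rightarrow> (nat \<Rightarrow> nat \<Rightarrow> 'a \<Rightarrow> real) \<Rightarrow> nat \<Rightarrow> 'a \<Rightarrow> real" where
  "bracket_coeff L c c' e Dc Dc' j y = (\<Sum>l\<in>L. c l y * Dc' j l y) - (\<Sum>k\<in>L. c' k y * Dc j k y) +
     (\<Sum>l\<in>L. \<Sum>k\<in>L. c l y * c' k y * e l k j y)"

lemma lie_bracket_eq_bracket_coeff:
  fixes X :: "nat \<Rightarrow> 'a::euclidean_space \<Rightarrow> 'a"
  assumes "integral_curves_through V L (\<lambda>j z. p j *\<^sub>R X j z)" "y \<in> V"
    and "\<forall>i\<in>insert i0 (insert i1 L). X i differentiable at y"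
    and "\<forall>z\<in>V. P0 *\<^sub>R X i0 z = (\<Sum>l\<in>L. (c l z * p l) *\<^sub>R X l z)"
    and "\<forall>z\<in>V. P1 *\<^sub>R X i1 z = (\<Sum>k\<in>L. (c' k z * p k) *\<^sub>R X k z)"
    and "\<forall>l\<in>L. \<forall>k\<in>L. lie_deriv_on V (\<lambda>z. p k *\<^sub>R X k z) (c l) (Dc l k)"
    and "\<forall>l\<in>L. \<forall>k\<in>L. lie_deriv_on V (\<lambda>z. p k *\<^sub>R X k z) (c' l) (Dc' l k)"
    and "\<forall>l\<in>L. \<forall>k\<in>L. (p l * p k) *\<^sub>R lie_bracket (X l) (X k) y = (\<Sum>j\<in>L. (e l k j y * p j) *\<^sub>R X j y)"
  shows "(P0 * P1) *\<^sub>R lie_bracket (X i0) (X i1) y = (\<Sum>j\<in>L. (bracket_coeff L c c' e Dc Dc' j y * p j) *\<^sub>R X j y)"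
proof -
  have "(\<Sum>l\<in>L. \<Sum>k\<in>L. (c l y * c' k y) *\<^sub>R ((p l * p k) *\<^sub>R lie_bracket (X l) (X k) y)) =
      (\<Sum>l\<in>L. \<Sum>k\<in>L. \<Sum>j\<in>L. (c l y * c' k y * e l k j y * p j) *\<^sub>R X j y)"
    using assms(8) by (simp add: scaleR_sum_right mult.assoc)
  also have "\<dots> = (\<Sum>l\<in>L. \<Sum>j\<in>L. \<Sum>k\<in>L. (c l y * c' k y * e l k j y * p j) *\<^sub>R X j y)"
    by (rule sum.cong[OF refl], rule sum.swap)
  also have "\<dots> = (\<Sum>j\<in>L. \<Sum>l\<in>L. \<Sum>k\<in>L. (c l y * c' k y * e l k j y * p j) *\<^sub>R X j y)"
    by (rule sum.swap)
  also have "\<dots> = (\<Sum>j\<in>L. ((\<Sum>l\<in>L. \<Sum>k\<in>L. c l y * c' k y * e l k j y) * p j) *\<^sub>R X j y)"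
    by (simp add: sum_distrib_right scaleR_sum_left)
  finally have brackets: "(\<Sum>l\<in>L. \<Sum>k\<in>L. (c l y * c' k y) *\<^sub>R ((p l * p k) *\<^sub>R lie_bracket (X l) (X k) y)) = \<dots>" .
  have derivs1: "(\<Sum>l\<in>L. \<Sum>k\<in>L. (c l y * Dc' k l y * p k) *\<^sub>R X k y) =
      (\<Sum>j\<in>L. ((\<Sum>l\<in>L. c l y * Dc' j l y) * p j) *\<^sub>R X j y)"
    by (subst sum.swap) (simp add: sum_distrib_right scaleR_sum_left)
  have derivs0: "(\<Sum>k\<in>L. \<Sum>l\<in>L. (c' k y * Dc l k y * p l) *\<^sub>R X l y) =
      (\<Sum>j\<in>L. ((\<Sum>k\<in>L. c' k y * Dc j k y) * p j) *\<^sub>R X j y)"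
    by (subst sum.swap) (simp add: sum_distrib_right scaleR_sum_left)
  have combine: "(\<Sum>j\<in>L. (f j * p j) *\<^sub>R X j y) - (\<Sum>j\<in>L. (g j * p j) *\<^sub>R X j y) + (\<Sum>j\<in>L. (h j * p j) *\<^sub>R X j y) =
      (\<Sum>j\<in>L. ((f j - g j + h j) * p j) *\<^sub>R X j y)" for f g h
    by (simp add: sum_subtractf[symmetric] sum.distrib[symmetric] algebra_simps)
  show ?thesis
    unfolding lie_bracket_expansion[OF assms(1-7)] brackets derivs0 derivs1 combine bracket_coeff_def ..
qed

text \<open>Each term of \<^const>\<open>bracket_coeff\<close> is a product of coefficients of \<open>X\<^sub>i\<^sub>0\<close>, \<open>X\<^sub>i\<^sub>1\<close>,
  \<open>[Y\<^sub>l, Y\<^sub>k]\<close> or of their first derivatives, so the Leibniz rule applies; this is why one more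
  derivative of \<open>c\<close> and \<open>c'\<close> is needed.\<close>

lemma bracket_coeff_lie_derivs_bounded:
  assumes "finite L" "integral_curves_through V L Y" "j \<in> L"
    and D0: "\<forall>l\<in>L. (\<forall>y\<in>V. D0 l [] y = c l y) \<and> lie_derivs_bounded V L Y (D0 l) (Suc m) (C0 l)"
    and D1: "\<forall>l\<in>L. (\<forall>y\<in>V. D1 l [] y = c' l y) \<and> lie_derivs_bounded V L Y (D1 l) (Suc m) (C1 l)"
    and DB: "\<forall>l\<in>L. \<forall>k\<in>L. (\<forall>y\<in>V. DB l k [] y = e l k j y) \<and> lie_derivs_bounded V L Y (DB l k) m (CB l k)"
    and "\<forall>l\<in>L. \<forall>k\<in>L. lie_deriv_on V (Y k) (c l) (Dc l k)"
    and "\<forall>l\<in>L. \<forall>k\<in>L. lie_deriv_on V (Y k) (c' l) (Dc' l k)"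
  shows "\<exists>D. (\<forall>y\<in>V. D [] y = bracket_coeff L c c' e Dc Dc' j y) \<and>
    lie_derivs_bounded V L Y D m ((\<Sum>l\<in>L. 2 ^ m * (C0 l * C1 j)) + (\<Sum>k\<in>L. 2 ^ m * (C1 k * C0 j)) +
      (\<Sum>l\<in>L. \<Sum>k\<in>L. 2 ^ m * (C0 l * (2 ^ m * (C1 k * CB l k)))))"
proof -
  have Dc: "Dc l k y = D0 l [k] y" if "l \<in> L" "k \<in> L" "y \<in> V" for l k y
  proof -
    have "lie_deriv_on V (Y k) (c l) (D0 l [k])"
      using D0 that lie_derivs_first[of V L Y "D0 l" m "c l" k] unfolding lie_derivs_bounded_def by blast
    then show ?thesis using lie_deriv_on_unique[OF assms(2) that(2)] assms(7) that by blast
  qed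
  have Dc': "Dc' l k y = D1 l [k] y" if "l \<in> L" "k \<in> L" "y \<in> V" for l k y
  proof -
    have "lie_deriv_on V (Y k) (c' l) (D1 l [k])"
      using D1 that lie_derivs_first[of V L Y "D1 l" m "c' l" k] unfolding lie_derivs_bounded_def by blast
    then show ?thesis using lie_deriv_on_unique[OF assms(2) that(2)] assms(8) that by blast
  qed
  define D where "D \<beta> y = (\<Sum>l\<in>L. leibniz_prod (D0 l) (\<lambda>\<beta>. D1 j (\<beta> @ [l])) \<beta> y) +
      - (\<Sum>k\<in>L. leibniz_prod (D1 k) (\<lambda>\<beta>. D0 j (\<beta> @ [k])) \<beta> y) +
      (\<Sum>l\<in>L. \<Sum>k\<in>L. leibniz_prod (D0 l) (leibniz_prod (D1 k) (DB l k)) \<beta> y)" for \<beta> y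
  have "\<forall>y\<in>V. D [] y = bracket_coeff L c c' e Dc Dc' j y"
    using D0 D1 DB assms(3) by (simp add: D_def bracket_coeff_def leibniz_prod_Nil Dc Dc' mult.assoc)
  moreover have "lie_derivs_bounded V L Y D m ((\<Sum>l\<in>L. 2 ^ m * (C0 l * C1 j)) + (\<Sum>k\<in>L. 2 ^ m * (C1 k * C0 j)) +
      (\<Sum>l\<in>L. \<Sum>k\<in>L. 2 ^ m * (C0 l * (2 ^ m * (C1 k * CB l k)))))"
  proof -
    have "lie_derivs_bounded V L Y (D0 l) m (C0 l)" "lie_derivs_bounded V L Y (D1 l) m (C1 l)"
      "lie_derivs_bounded V L Y (\<lambda>\<beta>. D0 j (\<beta> @ [l])) m (C0 j)" "lie_derivs_bounded V L Y (\<lambda>\<beta>. D1 j (\<beta> @ [l])) m (C1 j)"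
      if "l \<in> L" for l
      using D0 D1 that assms(3) by (auto intro: lie_derivs_bounded_le[of m "Suc m"] lie_derivs_bounded_shift)
    then show ?thesis
      unfolding D_def using DB
      by (intro lie_derivs_bounded_add lie_derivs_bounded_minus lie_derivs_bounded_sum[OF assms(1)] ballI
          lie_derivs_bounded_leibniz_prod) auto
  qed
  ultimately show ?thesis by blast
qed

text \<open>The definition of \<^const>\<open>controls\<close> with its witnesses exposed, and with the bound on the sum of
  suprema of \<open>|(\<delta>X)\<^sup>\<beta> c|\<close> replaced by the equivalent uniform bound on each \<open>|(\<delta>X)\<^sup>\<beta> c|\<close>.\<close>

definition lie_derivs_uniformly_bounded ::
  "'a::euclidean_space set \<Rightarrow> nat set \<Rightarrow> (nat \<Rightarrow> 'a \<Rightarrow> 'a) \<Rightarrow> (nat \<Rightarrow> real^'v) \<Rightarrow> 'a set \<Rightarrow> real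
    \<Rightarrow> ('a \<Rightarrow> real^'v \<Rightarrow> 'a \<Rightarrow> real) \<Rightarrow> nat \<Rightarrow> real \<Rightarrow> bool" where
  "lie_derivs_uniformly_bounded \<Omega> L X d U \<xi> f m C \<longleftrightarrow>
     (\<forall>x\<in>U. \<forall>\<delta>. (\<forall>\<mu>. 0 \<le> \<delta> $ \<mu> \<and> \<delta> $ \<mu> \<le> 1) \<longrightarrow>
        (\<exists>D. (\<forall>y\<in>cc_ball \<Omega> L X d x (\<xi> *\<^sub>R \<delta>). D [] y = f x \<delta> y) \<and>
             lie_derivs_bounded (cc_ball \<Omega> L X d x (\<xi> *\<^sub>R \<delta>)) L (\<lambda>j y. dpow \<delta> (d j) *\<^sub>R X j y) D m C))"

definition control_data ::
  "'a::euclidean_space set \<Rightarrow> nat set \<Rightarrow> (nat \<Rightarrow> 'a \<Rightarrow> 'a) \<Rightarrow> (nat \<Rightarrow> real^'v) \<Rightarrow> ('a \<Rightarrow> 'a) \<Rightarrow> real^'v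
    \<Rightarrow> 'a set \<Rightarrow> real \<Rightarrow> ('a \<Rightarrow> real^'v \<Rightarrow> nat \<Rightarrow> 'a \<Rightarrow> real) \<Rightarrow> bool" where
  "control_data \<Omega> L X d Z dZ U \<xi> c \<longleftrightarrow> open U \<and> 0 \<in> U \<and> U \<subseteq> \<Omega> \<and> 0 < \<xi> \<and>
     (\<forall>x\<in>U. cond_C \<Omega> L X d x (\<chi> \<mu>. \<xi>)) \<and>
     (\<forall>x\<in>U. \<forall>\<delta>. (\<forall>\<mu>. 0 \<le> \<delta> $ \<mu> \<and> \<delta> $ \<mu> \<le> 1) \<longrightarrow>
        (\<forall>y\<in>cc_ball \<Omega> L X d x (\<xi> *\<^sub>R \<delta>). dpow \<delta> dZ *\<^sub>R Z y = (\<Sum>l\<in>L. (c x \<delta> l y * dpow \<delta> (d l)) *\<^sub>R X l y))) \<and>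
     (\<forall>m. \<forall>l\<in>L. \<exists>C. lie_derivs_uniformly_bounded \<Omega> L X d U \<xi> (\<lambda>x \<delta>. c x \<delta> l) m C)"

lemma ex_SUP_sum_bound_iff:
  assumes "finite L"
  shows "(\<exists>C. \<forall>x\<in>U. \<forall>\<delta>. P \<delta> \<longrightarrow> (\<exists>D. vf_derivs (V x \<delta>) L (Y \<delta>) (g x \<delta>) D m \<and>
      (\<Sum>\<beta>\<in>{\<beta>. set \<beta> \<subseteq> L \<and> length \<beta> \<le> m}. (SUP y\<in>V x \<delta>. ereal \<bar>D \<beta> y\<bar>)) \<le> ereal C)) \<longleftrightarrow>
    (\<exists>C. \<forall>x\<in>U. \<forall>\<delta>. P \<delta> \<longrightarrow> (\<exists>D. (\<forall>y\<in>V x \<delta>. D [] y = g x \<delta> y) \<and> lie_derivs_bounded (V x \<delta>) L (Y \<delta>) D m C))"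
    (is "(\<exists>C. ?sup C) \<longleftrightarrow> (\<exists>C. ?pointwise C)")
proof
  assume "\<exists>C. ?sup C"
  then obtain C where C: "?sup C" ..
  have "?pointwise C"
  proof (intro ballI allI impI)
    fix x \<delta> assume "x \<in> U" "P \<delta>"
    then obtain D where "vf_derivs (V x \<delta>) L (Y \<delta>) (g x \<delta>) D m"
      "(\<Sum>\<beta>\<in>{\<beta>. set \<beta> \<subseteq> L \<and> length \<beta> \<le> m}. (SUP y\<in>V x \<delta>. ereal \<bar>D \<beta> y\<bar>)) \<le> ereal C"
      using C by blast
    then show "\<exists>D. (\<forall>y\<in>V x \<delta>. D [] y = g x \<delta> y) \<and> lie_derivs_bounded (V x \<delta>) L (Y \<delta>) D m C"
      using lie_derivs_bounded_if_SUP_sum_le[OF assms] unfolding vf_derivs_iff by blast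
  qed
  then show "\<exists>C. ?pointwise C" ..
next
  assume "\<exists>C. ?pointwise C"
  then obtain C where C: "?pointwise C" ..
  have "?sup (real (card {\<beta>. set \<beta> \<subseteq> L \<and> length \<beta> \<le> m}) * C)"
  proof (intro ballI allI impI)
    fix x \<delta> assume "x \<in> U" "P \<delta>"
    then obtain D where "\<forall>y\<in>V x \<delta>. D [] y = g x \<delta> y" "lie_derivs_bounded (V x \<delta>) L (Y \<delta>) D m C"
      using C by blast
    then show "\<exists>D. vf_derivs (V x \<delta>) L (Y \<delta>) (g x \<delta>) D m \<and>
        (\<Sum>\<beta>\<in>{\<beta>. set \<beta> \<subseteq> L \<and> length \<beta> \<le> m}. (SUP y\<in>V x \<delta>. ereal \<bar>D \<beta> y\<bar>))
          \<le> ereal (real (card {\<beta>. set \<beta> \<subseteq> L \<and> length \<beta> \<le> m}) * C)"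
      using SUP_sum_le_if_lie_derivs_bounded unfolding vf_derivs_iff lie_derivs_bounded_def by blast
  qed
  then show "\<exists>C. ?sup C" ..
qed

lemma controls_iff_control_data:
  assumes "finite L"
  shows "controls \<Omega> L X d Z dZ \<longleftrightarrow> (\<exists>U \<xi> c. control_data \<Omega> L X d Z dZ U \<xi> c)"
  unfolding controls_def control_data_def lie_derivs_uniformly_bounded_def ex_SUP_sum_bound_iff[OF assms]
  by blast

lemma control_data_mono:
  fixes d :: "nat \<Rightarrow> real^'v"
  assumes "control_data \<Omega> L X d Z dZ U \<xi> c" "open U'" "0 \<in> U'" "U' \<subseteq> U" "0 < \<xi>'" "\<xi>' \<le> \<xi>"
    and "\<forall>l\<in>L. \<forall>\<mu>. 0 \<le> d l $ \<mu>"
  shows "control_data \<Omega> L X d Z dZ U' \<xi>' c"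
proof -
  have ball: "cc_ball \<Omega> L X d x (\<xi>' *\<^sub>R \<delta>) \<subseteq> cc_ball \<Omega> L X d x (\<xi> *\<^sub>R \<delta>)" if "\<forall>\<mu>. 0 \<le> \<delta> $ \<mu>" for x \<delta>
    using cc_ball_scaleR_mono[OF assms(5,6) that assms(7)] .
  have bounded: "lie_derivs_uniformly_bounded \<Omega> L X d U' \<xi>' f m C"
    if bounded_U: "lie_derivs_uniformly_bounded \<Omega> L X d U \<xi> f m C" for f m C
    unfolding lie_derivs_uniformly_bounded_def
  proof (intro ballI allI impI)
    fix x and \<delta> :: "real^'v" assume "x \<in> U'" and \<delta>: "\<forall>\<mu>. 0 \<le> \<delta> $ \<mu> \<and> \<delta> $ \<mu> \<le> 1"
    then obtain D where "\<forall>y\<in>cc_ball \<Omega> L X d x (\<xi> *\<^sub>R \<delta>). D [] y = f x \<delta> y"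
      "lie_derivs_bounded (cc_ball \<Omega> L X d x (\<xi> *\<^sub>R \<delta>)) L (\<lambda>j y. dpow \<delta> (d j) *\<^sub>R X j y) D m C"
      using bounded_U assms(4) unfolding lie_derivs_uniformly_bounded_def by blast
    moreover have "cc_ball \<Omega> L X d x (\<xi>' *\<^sub>R \<delta>) \<subseteq> cc_ball \<Omega> L X d x (\<xi> *\<^sub>R \<delta>)" using ball \<delta> by blast
    ultimately show "\<exists>D. (\<forall>y\<in>cc_ball \<Omega> L X d x (\<xi>' *\<^sub>R \<delta>). D [] y = f x \<delta> y) \<and>
        lie_derivs_bounded (cc_ball \<Omega> L X d x (\<xi>' *\<^sub>R \<delta>)) L (\<lambda>j y. dpow \<delta> (d j) *\<^sub>R X j y) D m C"
      using lie_derivs_bounded_subset by blast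
  qed
  show ?thesis
    unfolding control_data_def
  proof (intro conjI)
    show "open U'" "0 \<in> U'" "0 < \<xi>'" by fact+
    show "U' \<subseteq> \<Omega>" using assms(1,4) unfolding control_data_def by blast
    show "\<forall>x\<in>U'. cond_C \<Omega> L X d x (\<chi> \<mu>. \<xi>')"
      using cond_C_mono[OF assms(5,6,7)] assms(1,4) unfolding control_data_def by blast
    show "\<forall>x\<in>U'. \<forall>\<delta>. (\<forall>\<mu>. 0 \<le> \<delta> $ \<mu> \<and> \<delta> $ \<mu> \<le> 1) \<longrightarrow>
        (\<forall>y\<in>cc_ball \<Omega> L X d x (\<xi>' *\<^sub>R \<delta>). dpow \<delta> dZ *\<^sub>R Z y = (\<Sum>l\<in>L. (c x \<delta> l y * dpow \<delta> (d l)) *\<^sub>R X l y))"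
      using assms(1,4) ball unfolding control_data_def by blast
    show "\<forall>m. \<forall>l\<in>L. \<exists>C. lie_derivs_uniformly_bounded \<Omega> L X d U' \<xi>' (\<lambda>x \<delta>. c x \<delta> l) m C"
      using assms(1) bounded unfolding control_data_def by blast
  qed
qed

lemma controls_common_data:
  assumes "finite L" "finite I" "I \<noteq> {}" "\<forall>l\<in>L. \<forall>\<mu>. 0 \<le> d l $ \<mu>"
    and "\<forall>i\<in>I. controls \<Omega> L X d (Z i) (dZ i)"
  obtains U \<xi> c where "\<forall>i\<in>I. control_data \<Omega> L X d (Z i) (dZ i) U \<xi> (c i)"
proof -
  obtain Ui \<xi>i c where data: "\<forall>i\<in>I. control_data \<Omega> L X d (Z i) (dZ i) (Ui i) (\<xi>i i) (c i)"
    using assms(5) unfolding controls_iff_control_data[OF assms(1)] by metis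
  define U where "U = (\<Inter>i\<in>I. Ui i)"
  define \<xi> where "\<xi> = Min (\<xi>i ` I)"
  have "open U" "0 \<in> U" using data assms(2) unfolding U_def control_data_def by auto
  moreover have "0 < \<xi>" using data assms(2,3) unfolding \<xi>_def control_data_def by auto
  moreover have "U \<subseteq> Ui i" "\<xi> \<le> \<xi>i i" if "i \<in> I" for i
    using that assms(2) unfolding U_def \<xi>_def by auto
  ultimately have "\<forall>i\<in>I. control_data \<Omega> L X d (Z i) (dZ i) U \<xi> (c i)"
    using data assms(4) control_data_mono by blast
  then show thesis ..
qed

lemma control_data_lie_deriv:
  assumes "control_data \<Omega> L X d Z dZ U \<xi> c" "x \<in> U" "\<forall>\<mu>. 0 \<le> \<delta> $ \<mu> \<and> \<delta> $ \<mu> \<le> 1" "j \<in> L" "k \<in> L"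
  shows "\<exists>h. lie_deriv_on (cc_ball \<Omega> L X d x (\<xi> *\<^sub>R \<delta>)) (\<lambda>y. dpow \<delta> (d k) *\<^sub>R X k y) (c x \<delta> j) h"
proof -
  obtain C where "lie_derivs_uniformly_bounded \<Omega> L X d U \<xi> (\<lambda>x \<delta>. c x \<delta> j) (Suc 0) C"
    using assms(1,4) unfolding control_data_def by blast
  then have "\<exists>D. (\<forall>y\<in>cc_ball \<Omega> L X d x (\<xi> *\<^sub>R \<delta>). D [] y = c x \<delta> j y) \<and>
      lie_derivs_bounded (cc_ball \<Omega> L X d x (\<xi> *\<^sub>R \<delta>)) L (\<lambda>j y. dpow \<delta> (d j) *\<^sub>R X j y) D (Suc 0) C"
    using assms(2,3) unfolding lie_derivs_uniformly_bounded_def by blast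
  then show ?thesis using lie_derivs_first assms(5) unfolding lie_derivs_bounded_def by blast
qed

section \<open>Controlling the Lie bracket\<close>

lemma control_data_bracket_identity:
  fixes X :: "nat \<Rightarrow> 'a::euclidean_space \<Rightarrow> 'a" and d :: "nat \<Rightarrow> real^'v"
  assumes "finite L" "open \<Omega>" "\<forall>i\<in>insert i0 (insert i1 L). smooth_on \<Omega> (X i) \<and> (\<forall>\<mu>. 0 \<le> d i $ \<mu>)"
    and c: "control_data \<Omega> L X d (X i0) (d i0) U \<xi> c" and c': "control_data \<Omega> L X d (X i1) (d i1) U \<xi> c'"
    and e: "\<forall>l\<in>L. \<forall>k\<in>L. control_data \<Omega> L X d (lie_bracket (X l) (X k)) (d l + d k) U \<xi> (e l k)"
    and x: "x \<in> U" "\<forall>\<mu>. 0 \<le> \<delta> $ \<mu> \<and> \<delta> $ \<mu> \<le> 1" and y: "y \<in> cc_ball \<Omega> L X d x (\<xi> *\<^sub>R \<delta>)"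
    and "\<forall>l\<in>L. \<forall>k\<in>L. lie_deriv_on (cc_ball \<Omega> L X d x (\<xi> *\<^sub>R \<delta>)) (\<lambda>y. dpow \<delta> (d k) *\<^sub>R X k y) (c x \<delta> l) (Dc l k)"
    and "\<forall>l\<in>L. \<forall>k\<in>L. lie_deriv_on (cc_ball \<Omega> L X d x (\<xi> *\<^sub>R \<delta>)) (\<lambda>y. dpow \<delta> (d k) *\<^sub>R X k y) (c' x \<delta> l) (Dc' l k)"
  shows "dpow \<delta> (d i0 + d i1) *\<^sub>R lie_bracket (X i0) (X i1) y =
    (\<Sum>j\<in>L. (bracket_coeff L (c x \<delta>) (c' x \<delta>) (\<lambda>l k. e l k x \<delta>) Dc Dc' j y * dpow \<delta> (d j)) *\<^sub>R X j y)"
proof -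
  have "0 < \<xi>" using c unfolding control_data_def by blast
  then have curves: "integral_curves_through (cc_ball \<Omega> L X d x (\<xi> *\<^sub>R \<delta>)) L (\<lambda>j y. dpow \<delta> (d j) *\<^sub>R X j y)"
    using integral_curves_through_cc_ball[OF assms(1,2)] assms(3) by blast
  have "y \<in> \<Omega>" using y unfolding cc_ball_def by blast
  then have diff: "\<forall>i\<in>insert i0 (insert i1 L). X i differentiable at y"
    using assms(3) smooth_on_differentiable by blast
  have "\<forall>l\<in>L. \<forall>k\<in>L. (dpow \<delta> (d l) * dpow \<delta> (d k)) *\<^sub>R lie_bracket (X l) (X k) y =
      (\<Sum>j\<in>L. (e l k x \<delta> j y * dpow \<delta> (d j)) *\<^sub>R X j y)"
    using e x y assms(3) unfolding control_data_def by (simp add: dpow_add)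
  moreover have "\<forall>z\<in>cc_ball \<Omega> L X d x (\<xi> *\<^sub>R \<delta>). dpow \<delta> (d i) *\<^sub>R X i z = (\<Sum>l\<in>L. (f x \<delta> l z * dpow \<delta> (d l)) *\<^sub>R X l z)"
    if "control_data \<Omega> L X d (X i) (d i) U \<xi> f" for i f
    using that x unfolding control_data_def by blast
  ultimately show ?thesis
    using lie_bracket_eq_bracket_coeff[OF curves y diff _ _ assms(10,11)] c c' assms(3) by (simp add: dpow_add)
qed

lemma lie_derivs_uniformly_bounded_bracket_coeff:
  fixes d :: "nat \<Rightarrow> real^'v"
  assumes "finite L" "j \<in> L"
    and curves: "\<And>x \<delta>. integral_curves_through (cc_ball \<Omega> L X d x (\<xi> *\<^sub>R \<delta>)) L (\<lambda>j y. dpow \<delta> (d j) *\<^sub>R X j y)"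
    and "\<forall>l\<in>L. lie_derivs_uniformly_bounded \<Omega> L X d U \<xi> (\<lambda>x \<delta>. c x \<delta> l) (Suc m) (C0 l)"
    and "\<forall>l\<in>L. lie_derivs_uniformly_bounded \<Omega> L X d U \<xi> (\<lambda>x \<delta>. c' x \<delta> l) (Suc m) (C1 l)"
    and "\<forall>l\<in>L. \<forall>k\<in>L. lie_derivs_uniformly_bounded \<Omega> L X d U \<xi> (\<lambda>x \<delta>. e l k x \<delta> j) m (CB l k)"
    and "\<forall>x\<in>U. \<forall>\<delta>. (\<forall>\<mu>. 0 \<le> \<delta> $ \<mu> \<and> \<delta> $ \<mu> \<le> 1) \<longrightarrow> (\<forall>l\<in>L. \<forall>k\<in>L.
      lie_deriv_on (cc_ball \<Omega> L X d x (\<xi> *\<^sub>R \<delta>)) (\<lambda>y. dpow \<delta> (d k) *\<^sub>R X k y) (c x \<delta> l) (Dc x \<delta> l k))"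
    and "\<forall>x\<in>U. \<forall>\<delta>. (\<forall>\<mu>. 0 \<le> \<delta> $ \<mu> \<and> \<delta> $ \<mu> \<le> 1) \<longrightarrow> (\<forall>l\<in>L. \<forall>k\<in>L.
      lie_deriv_on (cc_ball \<Omega> L X d x (\<xi> *\<^sub>R \<delta>)) (\<lambda>y. dpow \<delta> (d k) *\<^sub>R X k y) (c' x \<delta> l) (Dc' x \<delta> l k))"
  shows "lie_derivs_uniformly_bounded \<Omega> L X d U \<xi>
    (\<lambda>x \<delta>. bracket_coeff L (c x \<delta>) (c' x \<delta>) (\<lambda>l k. e l k x \<delta>) (Dc x \<delta>) (Dc' x \<delta>) j) m
    ((\<Sum>l\<in>L. 2 ^ m * (C0 l * C1 j)) + (\<Sum>k\<in>L. 2 ^ m * (C1 k * C0 j)) +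
      (\<Sum>l\<in>L. \<Sum>k\<in>L. 2 ^ m * (C0 l * (2 ^ m * (C1 k * CB l k)))))"
  unfolding lie_derivs_uniformly_bounded_def
proof (intro ballI allI impI)
  fix x and \<delta> :: "real^'v" assume x: "x \<in> U" "\<forall>\<mu>. 0 \<le> \<delta> $ \<mu> \<and> \<delta> $ \<mu> \<le> 1"
  let ?B = "cc_ball \<Omega> L X d x (\<xi> *\<^sub>R \<delta>)" and ?Y = "\<lambda>j y. dpow \<delta> (d j) *\<^sub>R X j y"
  have "\<forall>l\<in>L. \<exists>D. (\<forall>y\<in>?B. D [] y = c x \<delta> l y) \<and> lie_derivs_bounded ?B L ?Y D (Suc m) (C0 l)"
    using assms(4) x unfolding lie_derivs_uniformly_bounded_def by blast
  then obtain D0 where D0: "\<forall>l\<in>L. (\<forall>y\<in>?B. D0 l [] y = c x \<delta> l y) \<and> lie_derivs_bounded ?B L ?Y (D0 l) (Suc m) (C0 l)"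
    by (rule bchoice[elim_format]) blast
  have "\<forall>l\<in>L. \<exists>D. (\<forall>y\<in>?B. D [] y = c' x \<delta> l y) \<and> lie_derivs_bounded ?B L ?Y D (Suc m) (C1 l)"
    using assms(5) x unfolding lie_derivs_uniformly_bounded_def by blast
  then obtain D1 where D1: "\<forall>l\<in>L. (\<forall>y\<in>?B. D1 l [] y = c' x \<delta> l y) \<and> lie_derivs_bounded ?B L ?Y (D1 l) (Suc m) (C1 l)"
    by (rule bchoice[elim_format]) blast
  have "\<forall>l\<in>L. \<exists>Dl. \<forall>k\<in>L. (\<forall>y\<in>?B. Dl k [] y = e l k x \<delta> j y) \<and> lie_derivs_bounded ?B L ?Y (Dl k) m (CB l k)"
  proof
    fix l assume "l \<in> L"
    then have "\<forall>k\<in>L. \<exists>D. (\<forall>y\<in>?B. D [] y = e l k x \<delta> j y) \<and> lie_derivs_bounded ?B L ?Y D m (CB l k)"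
      using assms(6) x unfolding lie_derivs_uniformly_bounded_def by blast
    then show "\<exists>Dl. \<forall>k\<in>L. (\<forall>y\<in>?B. Dl k [] y = e l k x \<delta> j y) \<and> lie_derivs_bounded ?B L ?Y (Dl k) m (CB l k)"
      by (rule bchoice)
  qed
  then obtain DB where DB: "\<forall>l\<in>L. \<forall>k\<in>L. (\<forall>y\<in>?B. DB l k [] y = e l k x \<delta> j y) \<and> lie_derivs_bounded ?B L ?Y (DB l k) m (CB l k)"
    by (rule bchoice[elim_format]) blast
  show "\<exists>D. (\<forall>y\<in>?B. D [] y = bracket_coeff L (c x \<delta>) (c' x \<delta>) (\<lambda>l k. e l k x \<delta>) (Dc x \<delta>) (Dc' x \<delta>) j y) \<and>
      lie_derivs_bounded ?B L ?Y D m ((\<Sum>l\<in>L. 2 ^ m * (C0 l * C1 j)) + (\<Sum>k\<in>L. 2 ^ m * (C1 k * C0 j)) +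
        (\<Sum>l\<in>L. \<Sum>k\<in>L. 2 ^ m * (C0 l * (2 ^ m * (C1 k * CB l k)))))"
    using bracket_coeff_lie_derivs_bounded[OF assms(1) curves assms(2) D0 D1, of DB "\<lambda>l k. e l k x \<delta>"] DB assms(7,8) x
    by blast
qed

lemma control_data_bracket_coeff_bounded:
  fixes d :: "nat \<Rightarrow> real^'v"
  assumes "finite L" "j \<in> L"
    and curves: "\<And>x \<delta>. integral_curves_through (cc_ball \<Omega> L X d x (\<xi> *\<^sub>R \<delta>)) L (\<lambda>j y. dpow \<delta> (d j) *\<^sub>R X j y)"
    and c: "control_data \<Omega> L X d Z dZ U \<xi> c" and c': "control_data \<Omega> L X d Z' dZ' U \<xi> c'"
    and e: "\<forall>l\<in>L. \<forall>k\<in>L. control_data \<Omega> L X d (Zb l k) (dZb l k) U \<xi> (e l k)"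
    and Dc: "\<forall>x\<in>U. \<forall>\<delta>. (\<forall>\<mu>. 0 \<le> \<delta> $ \<mu> \<and> \<delta> $ \<mu> \<le> 1) \<longrightarrow> (\<forall>l\<in>L. \<forall>k\<in>L.
      lie_deriv_on (cc_ball \<Omega> L X d x (\<xi> *\<^sub>R \<delta>)) (\<lambda>y. dpow \<delta> (d k) *\<^sub>R X k y) (c x \<delta> l) (Dc x \<delta> l k))"
    and Dc': "\<forall>x\<in>U. \<forall>\<delta>. (\<forall>\<mu>. 0 \<le> \<delta> $ \<mu> \<and> \<delta> $ \<mu> \<le> 1) \<longrightarrow> (\<forall>l\<in>L. \<forall>k\<in>L.
      lie_deriv_on (cc_ball \<Omega> L X d x (\<xi> *\<^sub>R \<delta>)) (\<lambda>y. dpow \<delta> (d k) *\<^sub>R X k y) (c' x \<delta> l) (Dc' x \<delta> l k))"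
  shows "\<exists>C. lie_derivs_uniformly_bounded \<Omega> L X d U \<xi>
    (\<lambda>x \<delta>. bracket_coeff L (c x \<delta>) (c' x \<delta>) (\<lambda>l k. e l k x \<delta>) (Dc x \<delta>) (Dc' x \<delta>) j) m C"
proof -
  have "\<forall>l\<in>L. \<exists>C. lie_derivs_uniformly_bounded \<Omega> L X d U \<xi> (\<lambda>x \<delta>. c x \<delta> l) (Suc m) C"
    using c unfolding control_data_def by blast
  then obtain C0 where C0: "\<forall>l\<in>L. lie_derivs_uniformly_bounded \<Omega> L X d U \<xi> (\<lambda>x \<delta>. c x \<delta> l) (Suc m) (C0 l)"
    by (rule bchoice[elim_format]) blast
  have "\<forall>l\<in>L. \<exists>C. lie_derivs_uniformly_bounded \<Omega> L X d U \<xi> (\<lambda>x \<delta>. c' x \<delta> l) (Suc m) C"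
    using c' unfolding control_data_def by blast
  then obtain C1 where C1: "\<forall>l\<in>L. lie_derivs_uniformly_bounded \<Omega> L X d U \<xi> (\<lambda>x \<delta>. c' x \<delta> l) (Suc m) (C1 l)"
    by (rule bchoice[elim_format]) blast
  have "\<forall>l\<in>L. \<exists>Cl. \<forall>k\<in>L. lie_derivs_uniformly_bounded \<Omega> L X d U \<xi> (\<lambda>x \<delta>. e l k x \<delta> j) m (Cl k)"
  proof
    fix l assume "l \<in> L"
    then have "\<forall>k\<in>L. \<exists>C. lie_derivs_uniformly_bounded \<Omega> L X d U \<xi> (\<lambda>x \<delta>. e l k x \<delta> j) m C"
      using e assms(2) unfolding control_data_def by blast
    then show "\<exists>Cl. \<forall>k\<in>L. lie_derivs_uniformly_bounded \<Omega> L X d U \<xi> (\<lambda>x \<delta>. e l k x \<delta> j) m (Cl k)"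
      by (rule bchoice)
  qed
  then obtain CB where CB: "\<forall>l\<in>L. \<forall>k\<in>L. lie_derivs_uniformly_bounded \<Omega> L X d U \<xi> (\<lambda>x \<delta>. e l k x \<delta> j) m (CB l k)"
    by (rule bchoice[elim_format]) blast
  show ?thesis
    using lie_derivs_uniformly_bounded_bracket_coeff[where c=c and c'=c' and e=e and Dc=Dc and Dc'=Dc',
        OF assms(1,2) curves C0 C1 CB Dc Dc'] by blast
qed

lemma control_data_lie_bracket:
  fixes X :: "nat \<Rightarrow> 'a::euclidean_space \<Rightarrow> 'a" and d :: "nat \<Rightarrow> real^'v"
  assumes "finite L" "open \<Omega>" "\<forall>i\<in>insert i0 (insert i1 L). smooth_on \<Omega> (X i) \<and> (\<forall>\<mu>. 0 \<le> d i $ \<mu>)"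
    and c: "control_data \<Omega> L X d (X i0) (d i0) U \<xi> c" and c': "control_data \<Omega> L X d (X i1) (d i1) U \<xi> c'"
    and e: "\<forall>l\<in>L. \<forall>k\<in>L. control_data \<Omega> L X d (lie_bracket (X l) (X k)) (d l + d k) U \<xi> (e l k)"
  obtains c'' where "control_data \<Omega> L X d (lie_bracket (X i0) (X i1)) (d i0 + d i1) U \<xi> c''"
proof -
  define Dc where "Dc x \<delta> l k =
    (SOME h. lie_deriv_on (cc_ball \<Omega> L X d x (\<xi> *\<^sub>R \<delta>)) (\<lambda>y. dpow \<delta> (d k) *\<^sub>R X k y) (c x \<delta> l) h)" for x \<delta> l k
  define Dc' where "Dc' x \<delta> l k =
    (SOME h. lie_deriv_on (cc_ball \<Omega> L X d x (\<xi> *\<^sub>R \<delta>)) (\<lambda>y. dpow \<delta> (d k) *\<^sub>R X k y) (c' x \<delta> l) h)" for x \<delta> l k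
  have Dc: "\<forall>x\<in>U. \<forall>\<delta>. (\<forall>\<mu>. 0 \<le> \<delta> $ \<mu> \<and> \<delta> $ \<mu> \<le> 1) \<longrightarrow> (\<forall>l\<in>L. \<forall>k\<in>L.
      lie_deriv_on (cc_ball \<Omega> L X d x (\<xi> *\<^sub>R \<delta>)) (\<lambda>y. dpow \<delta> (d k) *\<^sub>R X k y) (c x \<delta> l) (Dc x \<delta> l k))"
    unfolding Dc_def by (blast intro: someI_ex[OF control_data_lie_deriv[OF c]])
  have Dc': "\<forall>x\<in>U. \<forall>\<delta>. (\<forall>\<mu>. 0 \<le> \<delta> $ \<mu> \<and> \<delta> $ \<mu> \<le> 1) \<longrightarrow> (\<forall>l\<in>L. \<forall>k\<in>L.
      lie_deriv_on (cc_ball \<Omega> L X d x (\<xi> *\<^sub>R \<delta>)) (\<lambda>y. dpow \<delta> (d k) *\<^sub>R X k y) (c' x \<delta> l) (Dc' x \<delta> l k))"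
    unfolding Dc'_def by (blast intro: someI_ex[OF control_data_lie_deriv[OF c']])
  define c'' where "c'' x \<delta> = bracket_coeff L (c x \<delta>) (c' x \<delta>) (\<lambda>l k. e l k x \<delta>) (Dc x \<delta>) (Dc' x \<delta>)" for x \<delta>
  have "0 < \<xi>" using c unfolding control_data_def by blast
  moreover have "\<forall>l\<in>L. smooth_on \<Omega> (X l)" using assms(3) by blast
  ultimately have curves: "integral_curves_through (cc_ball \<Omega> L X d x (\<xi> *\<^sub>R \<delta>)) L (\<lambda>j y. dpow \<delta> (d j) *\<^sub>R X j y)"
    for x \<delta> using integral_curves_through_cc_ball[OF assms(1,2)] by blast
  have bounded: "\<exists>C. lie_derivs_uniformly_bounded \<Omega> L X d U \<xi> (\<lambda>x \<delta>. c'' x \<delta> j) m C" if "j \<in> L" for j m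
    unfolding c''_def by (rule control_data_bracket_coeff_bounded[OF assms(1) that curves c c' e Dc Dc'])
  have "control_data \<Omega> L X d (lie_bracket (X i0) (X i1)) (d i0 + d i1) U \<xi> c''"
    unfolding control_data_def
  proof (intro conjI)
    show "open U" "0 \<in> U" "U \<subseteq> \<Omega>" "0 < \<xi>" "\<forall>x\<in>U. cond_C \<Omega> L X d x (\<chi> \<mu>. \<xi>)"
      using c unfolding control_data_def by blast+
    show "\<forall>m. \<forall>l\<in>L. \<exists>C. lie_derivs_uniformly_bounded \<Omega> L X d U \<xi> (\<lambda>x \<delta>. c'' x \<delta> l) m C"
      using bounded by blast
    show "\<forall>x\<in>U. \<forall>\<delta>. (\<forall>\<mu>. 0 \<le> \<delta> $ \<mu> \<and> \<delta> $ \<mu> \<le> 1) \<longrightarrow>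
        (\<forall>y\<in>cc_ball \<Omega> L X d x (\<xi> *\<^sub>R \<delta>). dpow \<delta> (d i0 + d i1) *\<^sub>R lie_bracket (X i0) (X i1) y =
          (\<Sum>l\<in>L. (c'' x \<delta> l y * dpow \<delta> (d l)) *\<^sub>R X l y))"
      unfolding c''_def
      by (intro ballI allI impI control_data_bracket_identity[OF assms(1-3) c c' e]) (use Dc Dc' in auto)
  qed
  then show thesis ..
qed

theorem controls_lie_bracket:
  fixes X :: "nat \<Rightarrow> 'a::euclidean_space \<Rightarrow> 'a" and d :: "nat \<Rightarrow> real^'v"
  assumes "finite L" "open \<Omega>" "\<forall>i\<in>insert i0 (insert i1 L). smooth_on \<Omega> (X i) \<and> (\<forall>\<mu>. 0 \<le> d i $ \<mu>)"
    and "\<forall>l\<in>L. \<forall>k\<in>L. controls \<Omega> L X d (lie_bracket (X l) (X k)) (d l + d k)"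
    and "controls \<Omega> L X d (X i0) (d i0)" "controls \<Omega> L X d (X i1) (d i1)"
  shows "controls \<Omega> L X d (lie_bracket (X i0) (X i1)) (d i0 + d i1)"
proof -
  define I where "I = Inl ` {i0, i1} \<union> Inr ` (L \<times> L)"
  define Z where "Z = case_sum X (\<lambda>(l, k). lie_bracket (X l) (X k))"
  define dZ where "dZ = case_sum d (\<lambda>(l, k). d l + d k)"
  have controls: "\<forall>i\<in>I. controls \<Omega> L X d (Z i) (dZ i)"
    using assms(4-6) unfolding I_def Z_def dZ_def by force
  have I: "finite I" "I \<noteq> {}" using assms(1) unfolding I_def by simp_all
  have nonneg: "\<forall>l\<in>L. \<forall>\<mu>. 0 \<le> d l $ \<mu>" using assms(3) by blast
  obtain U \<xi> c where data: "\<forall>i\<in>I. control_data \<Omega> L X d (Z i) (dZ i) U \<xi> (c i)"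
    by (rule controls_common_data[OF assms(1) I nonneg controls])
  have c0: "control_data \<Omega> L X d (X i0) (d i0) U \<xi> (c (Inl i0))"
    and c1: "control_data \<Omega> L X d (X i1) (d i1) U \<xi> (c (Inl i1))"
    and brackets: "\<forall>l\<in>L. \<forall>k\<in>L. control_data \<Omega> L X d (lie_bracket (X l) (X k)) (d l + d k) U \<xi> (c (Inr (l, k)))"
    using data unfolding I_def Z_def dZ_def by auto
  obtain c'' where "control_data \<Omega> L X d (lie_bracket (X i0) (X i1)) (d i0 + d i1) U \<xi> c''"
    by (rule control_data_lie_bracket[OF assms(1-3) c0 c1 brackets])
  then show ?thesis using controls_iff_control_data[OF assms(1)] by blast
qed

theorem lemma7p3:
  fixes \<Omega> :: "'a::euclidean_space set"
    and X :: "nat \<Rightarrow> 'a \<Rightarrow> 'a"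
    and d :: "nat \<Rightarrow> real^'v"
    and q :: nat
  assumes "open \<Omega>" and "0 \<in> \<Omega>" and "q \<ge> 2"
    and "\<forall>i\<in>{0..q}. smooth_on \<Omega> (X i)"
    and "\<forall>i\<in>{0..q}. (\<forall>\<mu>. 0 \<le> d i $ \<mu>) \<and> d i \<noteq> 0"
    and "\<forall>i\<in>{2..q}. \<forall>j\<in>{2..q}. controls \<Omega> {2..q} X d (lie_bracket (X i) (X j)) (d i + d j)"
    and "controls \<Omega> {2..q} X d (X 0) (d 0)"
    and "controls \<Omega> {2..q} X d (X 1) (d 1)"
  shows "controls \<Omega> {2..q} X d (lie_bracket (X 0) (X 1)) (d 0 + d 1)"
proof (rule controls_lie_bracket)
  have "insert 0 (insert 1 {2..q}) \<subseteq> {0..q}" using assms(3) by auto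
  then show "\<forall>i\<in>insert 0 (insert 1 {2..q}). smooth_on \<Omega> (X i) \<and> (\<forall>\<mu>. 0 \<le> d i $ \<mu>)"
    using assms(4,5) by blast
qed (fact assms(1,6,7,8) | simp)+
end
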